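(* Let $\mathcal{H}$ be an infinite-dimensional separable complex Hilbert space, let $\mathcal{T}_1(\mathcal{H})_{\mathrm{sa}}$ be the real Banach space of selfadjoint trace class operators on $\mathcal{H}$, let $\mathcal{F}(\mathcal{H})_{\mathrm{sa}}$ be the linear manifold of selfadjoint finite-rank operators, and for $k\in\mathbb{N}$ let $\mathcal{P}_k(\mathcal{H})$ be the set of orthogonal projections of rank $k$. Let $\mathcal{L}$ be a linear operator in $\mathcal{T}_1(\mathcal{H})_{\mathrm{sa}}$ with domain $\mathrm{dom}(\mathcal{L})=\mathcal{F}(\mathcal{H})_{\mathrm{sa}}$ such that $\mathcal{L}(\mathcal{P}_k(\mathcal{H}))=\mathcal{P}_k(\mathcal{H})$ for some $k\in\mathbb{N}$; if $k>1$, assume also that $\mathcal{L}$ is injective. Then $\mathcal{L}$ maps $\mathcal{F}(\mathcal{H})_{\mathrm{sa}}$ bijectively onto itself. *)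

theory Defs
  imports Complex_Main
begin

text \<open>The separable infinite-dimensional complex Hilbert space is modelled concretely
  as l2(N): square-summable complex sequences.  Every such space is unitarily
  isomorphic to l2(N) and the statement is invariant under unitary equivalence.\<close>

type_synonym vec = "nat \<Rightarrow> complex"
type_synonym op = "vec \<Rightarrow> vec"

definition l2 :: "vec set" where
  "l2 = {x. summable (\<lambda>n. (cmod (x n))\<^sup>2)}"

definition l2inner :: "vec \<Rightarrow> vec \<Rightarrow> complex" where
  "l2inner x y = (\<Sum>n. x n * cnj (y n))"

definition l2norm :: "vec \<Rightarrow> real" where
  "l2norm x = sqrt (\<Sum>n. (cmod (x n))\<^sup>2)"

definition basis_vec :: "nat \<Rightarrow> vec" where
  "basis_vec k = (\<lambda>n. if n = k then 1 else 0)"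

text \<open>Bounded (complex-linear) operators on l2; normalised to be 0 off l2 so that
  operator equality is function equality.\<close>
definition bounded_op :: "op \<Rightarrow> bool" where
  "bounded_op T \<longleftrightarrow>
     (\<forall>x\<in>l2. T x \<in> l2) \<and>
     (\<forall>x. x \<notin> l2 \<longrightarrow> T x = (\<lambda>n. 0)) \<and>
     (\<forall>x\<in>l2. \<forall>y\<in>l2. \<forall>a b::complex.
        T (\<lambda>n. a * x n + b * y n) = (\<lambda>n. a * T x n + b * T y n)) \<and>
     (\<exists>C. \<forall>x\<in>l2. l2norm (T x) \<le> C * l2norm x)"

definition selfadjoint_op :: "op \<Rightarrow> bool" where
  "selfadjoint_op T \<longleftrightarrow> bounded_op T \<and>
     (\<forall>x\<in>l2. \<forall>y\<in>l2. l2inner (T x) y = l2inner x (T y))"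

definition cspan :: "vec set \<Rightarrow> vec set" where
  "cspan B = {(\<lambda>n. \<Sum>b\<in>B. c b * b n) | c. True}"

definition clin_indep :: "vec set \<Rightarrow> bool" where
  "clin_indep B \<longleftrightarrow> finite B \<and>
     (\<forall>c. (\<lambda>n. \<Sum>b\<in>B. c b * b n) = (\<lambda>n. 0) \<longrightarrow> (\<forall>b\<in>B. c b = 0))"

definition has_rank :: "op \<Rightarrow> nat \<Rightarrow> bool" where
  "has_rank T k \<longleftrightarrow> (\<exists>B. B \<subseteq> l2 \<and> clin_indep B \<and> card B = k \<and> T ` l2 = cspan B)"

definition finite_rank :: "op \<Rightarrow> bool" where
  "finite_rank T \<longleftrightarrow> (\<exists>k. has_rank T k)"

definition hilbert_schmidt :: "op \<Rightarrow> bool" where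
  "hilbert_schmidt T \<longleftrightarrow> bounded_op T \<and> summable (\<lambda>n. (l2norm (T (basis_vec n)))\<^sup>2)"

definition trace_class :: "op \<Rightarrow> bool" where
  "trace_class T \<longleftrightarrow> (\<exists>A B. hilbert_schmidt A \<and> hilbert_schmidt B \<and> T = A \<circ> B)"

definition T1sa :: "op set" where
  "T1sa = {T. trace_class T \<and> selfadjoint_op T}"

definition Fsa :: "op set" where
  "Fsa = {T. finite_rank T \<and> selfadjoint_op T}"

definition Proj :: "nat \<Rightarrow> op set" where
  "Proj k = {P. selfadjoint_op P \<and> P \<circ> P = P \<and> has_rank P k}"

definition op_add :: "op \<Rightarrow> op \<Rightarrow> op" where
  "op_add S T = (\<lambda>x n. S x n + T x n)"

definition op_scale :: "real \<Rightarrow> op \<Rightarrow> op" where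
  "op_scale a T = (\<lambda>x n. complex_of_real a * T x n)"

end

theory Submission
  imports Defs "HOL-Library.Function_Algebras"
begin

text \<open>
  Surjectivity holds for every k. A selfadjoint finite-rank operator is a real combination
  of rank-one projections (expand it in an orthonormal basis of its range and polarize), and
  the projection onto a unit vector z is a real combination of rank-k projections: for an
  orthonormal family z, f_1, ..., f_k with F = {f_1, ..., f_k},
  P_z = (1/k) \<Sum>_i P_(F - {f_i} + {z}) - ((k - 1)/k) P_F.
  So the selfadjoint finite-rank operators are the real span of the rank-k projections, and
  L maps this span onto the span of L(Proj k) = Proj k.

  Injectivity is only needed for k = 1. Write L(P_x) = P_(\<phi> x). For orthonormal u, v,
  evaluating L(P_(\<alpha>u + \<beta>v)) at \<phi> u gives
  |<\<phi> u, \<phi>(\<alpha>u + \<beta>v)>|^2 = |\<alpha>|^2 + |\<beta>|^2 \<kappa>  with  \<kappa> = |<\<phi> u, \<phi> v>|^2,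
  because nonzero cross terms would push a transition probability above 1. A configuration
  argument in the plane spanned by \<phi> u and \<phi> v forces \<kappa> \<in> {0, 1}, and \<kappa> = 1 would make L
  collapse all rank-one projections to a single one. So \<kappa> = 0, L preserves transition
  probabilities, <(L X)(\<phi> x), \<phi> x> = <X x, x> for all X, and L X = 0 forces X = 0.
\<close>

section \<open>Square-summable sequences\<close>

definition cscale :: "complex \<Rightarrow> vec \<Rightarrow> vec" where
  "cscale c x = (\<lambda>n. c * x n)"

definition l2norm2 :: "vec \<Rightarrow> real" where
  "l2norm2 x = (\<Sum>n. (cmod (x n))\<^sup>2)"

definition unit_vec :: "vec \<Rightarrow> bool" where
  "unit_vec x \<longleftrightarrow> x \<in> l2 \<and> l2inner x x = 1"

lemma sum_apply: "(\<Sum>i\<in>A. f i) x = (\<Sum>i\<in>A. f i x)"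
  by (induction A rule: infinite_finite_induct) auto

lemma cscale_apply: "cscale c x n = c * x n"
  by (simp add: cscale_def)

lemma mem_l2_iff: "x \<in> l2 \<longleftrightarrow> summable (\<lambda>n. (cmod (x n))\<^sup>2)"
  by (simp add: l2_def)

lemma summable_l2inner:
  assumes "x \<in> l2" "y \<in> l2"
  shows "summable (\<lambda>n. x n * cnj (y n))"
proof (rule summable_comparison_test)
  show "summable (\<lambda>n. ((cmod (x n))\<^sup>2 + (cmod (y n))\<^sup>2) / 2)"
    using assms by (intro summable_divide summable_add) (auto simp: mem_l2_iff)
  show "\<exists>N. \<forall>n\<ge>N. norm (x n * cnj (y n)) \<le> ((cmod (x n))\<^sup>2 + (cmod (y n))\<^sup>2) / 2"
  proof (intro exI allI impI)
    fix n
    have "0 \<le> (cmod (x n) - cmod (y n))\<^sup>2" by simp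
    then show "norm (x n * cnj (y n)) \<le> ((cmod (x n))\<^sup>2 + (cmod (y n))\<^sup>2) / 2"
      by (simp add: norm_mult power2_eq_square algebra_simps)
  qed
qed

lemma l2_zero [simp, intro]: "(0::vec) \<in> l2"
  by (simp add: mem_l2_iff)

lemma l2_zero_fun [simp, intro]: "(\<lambda>n. 0::complex) \<in> l2"
  by (simp add: mem_l2_iff)

lemma l2_add [simp, intro]:
  assumes "x \<in> l2" "y \<in> l2"
  shows "x + y \<in> l2"
  unfolding mem_l2_iff
proof (rule summable_comparison_test)
  show "summable (\<lambda>n. 2 * (cmod (x n))\<^sup>2 + 2 * (cmod (y n))\<^sup>2)"
    using assms by (intro summable_add summable_mult) (auto simp: mem_l2_iff)
  show "\<exists>N. \<forall>n\<ge>N. norm ((cmod ((x + y) n))\<^sup>2) \<le> 2 * (cmod (x n))\<^sup>2 + 2 * (cmod (y n))\<^sup>2"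
  proof (intro exI allI impI)
    fix n
    have "(cmod (x n + y n))\<^sup>2 \<le> (cmod (x n) + cmod (y n))\<^sup>2"
      by (simp add: power_mono norm_triangle_ineq)
    also have "\<dots> \<le> 2 * (cmod (x n))\<^sup>2 + 2 * (cmod (y n))\<^sup>2"
      using sum_squares_ge_zero[of "cmod (x n) - cmod (y n)" 0]
      by (simp add: power2_eq_square algebra_simps)
    finally show "norm ((cmod ((x + y) n))\<^sup>2) \<le> 2 * (cmod (x n))\<^sup>2 + 2 * (cmod (y n))\<^sup>2"
      by simp
  qed
qed

lemma l2_cscale [simp, intro]:
  assumes "x \<in> l2"
  shows "cscale c x \<in> l2"
proof -
  have "summable (\<lambda>n. (cmod c)\<^sup>2 * (cmod (x n))\<^sup>2)"
    using assms by (intro summable_mult) (auto simp: mem_l2_iff)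
  then show ?thesis
    by (simp add: mem_l2_iff norm_mult power_mult_distrib cscale_apply)
qed

lemma l2_uminus [simp, intro]: "x \<in> l2 \<Longrightarrow> - x \<in> l2"
  by (simp add: mem_l2_iff)

lemma l2_diff [simp, intro]: "x \<in> l2 \<Longrightarrow> y \<in> l2 \<Longrightarrow> x - y \<in> l2"
  using l2_add[of x "- y"] by simp

lemma l2_sum [intro]: "(\<And>i. i \<in> A \<Longrightarrow> f i \<in> l2) \<Longrightarrow> sum f A \<in> l2"
  by (induction A rule: infinite_finite_induct) auto

lemma l2_basis_vec [simp, intro]: "basis_vec k \<in> l2"
proof -
  have "(\<lambda>n. (cmod (basis_vec k n))\<^sup>2) = (\<lambda>n. if n = k then 1 else 0)"
    by (auto simp: basis_vec_def)
  then show ?thesis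
    unfolding mem_l2_iff by (simp add: summable_single)
qed

lemma l2inner_sums: "x \<in> l2 \<Longrightarrow> y \<in> l2 \<Longrightarrow> (\<lambda>n. x n * cnj (y n)) sums l2inner x y"
  unfolding l2inner_def by (intro summable_sums summable_l2inner)

lemma l2inner_add_left:
  "x \<in> l2 \<Longrightarrow> y \<in> l2 \<Longrightarrow> z \<in> l2 \<Longrightarrow> l2inner (x + y) z = l2inner x z + l2inner y z"
  unfolding l2inner_def
  by (simp add: distrib_right suminf_add[OF summable_l2inner summable_l2inner])

lemma l2inner_cscale_left: "x \<in> l2 \<Longrightarrow> y \<in> l2 \<Longrightarrow> l2inner (cscale c x) y = c * l2inner x y"
  unfolding l2inner_def
  by (simp add: mult.assoc suminf_mult[OF summable_l2inner] cscale_apply)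

lemma l2inner_commute: "x \<in> l2 \<Longrightarrow> y \<in> l2 \<Longrightarrow> l2inner y x = cnj (l2inner x y)"
proof -
  assume xy: "x \<in> l2" "y \<in> l2"
  have "(\<lambda>n. cnj (x n * cnj (y n))) sums cnj (l2inner x y)"
    using l2inner_sums[OF xy] by (simp only: sums_cnj)
  then have "(\<lambda>n. y n * cnj (x n)) sums cnj (l2inner x y)"
    by (simp add: mult.commute)
  then show ?thesis
    using l2inner_sums[OF xy(2) xy(1)] sums_unique2 by blast
qed

lemma l2inner_add_right:
  "x \<in> l2 \<Longrightarrow> y \<in> l2 \<Longrightarrow> z \<in> l2 \<Longrightarrow> l2inner z (x + y) = l2inner z x + l2inner z y"
  by (subst (1 2 3) l2inner_commute) (auto simp: l2inner_add_left)

lemma l2inner_cscale_right: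
  "x \<in> l2 \<Longrightarrow> y \<in> l2 \<Longrightarrow> l2inner y (cscale c x) = cnj c * l2inner y x"
  by (subst (1 2) l2inner_commute) (auto simp: l2inner_cscale_left)

lemma l2inner_zero_left [simp]: "l2inner 0 y = 0"
  by (simp add: l2inner_def)

lemma l2inner_zero_right [simp]: "l2inner y 0 = 0"
  by (simp add: l2inner_def)

lemma l2inner_diff_left:
  assumes "x \<in> l2" "y \<in> l2" "z \<in> l2"
  shows "l2inner (x - y) z = l2inner x z - l2inner y z"
proof -
  have e: "x - y = x + cscale (-1) y"
    by (simp add: fun_eq_iff cscale_apply)
  show ?thesis
    unfolding e using assms by (simp add: l2inner_add_left l2inner_cscale_left)
qed

lemma l2inner_diff_right:
  "x \<in> l2 \<Longrightarrow> y \<in> l2 \<Longrightarrow> z \<in> l2 \<Longrightarrow> l2inner z (x - y) = l2inner z x - l2inner z y"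
  by (subst (1 2 3) l2inner_commute) (auto simp: l2inner_diff_left)

lemma l2inner_sum_left:
  "(\<And>i. i \<in> A \<Longrightarrow> f i \<in> l2) \<Longrightarrow> y \<in> l2 \<Longrightarrow> l2inner (sum f A) y = (\<Sum>i\<in>A. l2inner (f i) y)"
  by (induction A rule: infinite_finite_induct) (auto simp: l2inner_add_left[OF _ l2_sum])

lemma l2inner_sum_right:
  "(\<And>i. i \<in> A \<Longrightarrow> f i \<in> l2) \<Longrightarrow> y \<in> l2 \<Longrightarrow> l2inner y (sum f A) = (\<Sum>i\<in>A. l2inner y (f i))"
  by (induction A rule: infinite_finite_induct) (auto simp: l2inner_add_right[OF _ l2_sum])

lemma l2inner_self: "x \<in> l2 \<Longrightarrow> l2inner x x = complex_of_real (l2norm2 x)"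
proof -
  assume x: "x \<in> l2"
  have "(\<lambda>n. complex_of_real ((cmod (x n))\<^sup>2)) sums complex_of_real (l2norm2 x)"
    using x by (intro sums_of_real) (simp add: mem_l2_iff l2norm2_def summable_sums)
  moreover have "\<And>n. complex_of_real ((cmod (x n))\<^sup>2) = x n * cnj (x n)"
    by (rule complex_norm_square)
  ultimately have "(\<lambda>n. x n * cnj (x n)) sums complex_of_real (l2norm2 x)"
    by simp
  then show ?thesis
    using l2inner_sums[OF x x] sums_unique2 by blast
qed

lemma l2norm2_nonneg: "x \<in> l2 \<Longrightarrow> l2norm2 x \<ge> 0"
  unfolding l2norm2_def mem_l2_iff by (intro suminf_nonneg) auto

lemma l2norm2_eq_0D: "x \<in> l2 \<Longrightarrow> l2norm2 x = 0 \<Longrightarrow> x = 0"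
  using suminf_eq_zero_iff[of "\<lambda>n. (cmod (x n))\<^sup>2"]
  by (auto simp: mem_l2_iff l2norm2_def fun_eq_iff)

lemma l2inner_self_eq_0D: "x \<in> l2 \<Longrightarrow> l2inner x x = 0 \<Longrightarrow> x = 0"
  by (simp add: l2inner_self l2norm2_eq_0D)

lemma l2norm_eq_sqrt: "l2norm x = sqrt (l2norm2 x)"
  by (simp add: l2norm_def l2norm2_def)

lemma l2norm_nonneg: "x \<in> l2 \<Longrightarrow> l2norm x \<ge> 0"
  by (simp add: l2norm_eq_sqrt l2norm2_nonneg)

lemma l2inner_Cauchy_Schwarz:
  assumes x: "x \<in> l2" and y: "y \<in> l2"
  shows "(cmod (l2inner x y))\<^sup>2 \<le> l2norm2 x * l2norm2 y"
proof (cases "y = 0")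
  case True
  then show ?thesis by (simp add: l2norm2_def)
next
  case False
  define n where "n = l2norm2 y"
  have n: "n > 0"
    using l2norm2_nonneg[OF y] l2norm2_eq_0D[OF y] False unfolding n_def by force
  define a where "a = l2inner x y"
  define c where "c = a / complex_of_real n"
  define z where "z = x - cscale c y"
  have z: "z \<in> l2" unfolding z_def using x y by auto
  have yy: "l2inner y y = complex_of_real n" by (simp add: l2inner_self y n_def)
  have yx: "l2inner y x = cnj a" unfolding a_def by (rule l2inner_commute[OF x y])
  have "l2inner z z = l2inner x x - cnj c * l2inner x y - c * l2inner y x + c * cnj c * l2inner y y"
    unfolding z_def using x y
    by (simp add: l2inner_diff_left l2inner_diff_right l2inner_cscale_left l2inner_cscale_right
        algebra_simps)
  also have "\<dots> = l2inner x x - a * cnj a / complex_of_real n"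
    unfolding yy yx a_def[symmetric] c_def using n
    by (simp add: field_simps power2_eq_square)
  finally have "Re (l2inner z z) = l2norm2 x - (cmod a)\<^sup>2 / n"
    using x by (simp add: l2inner_self complex_mult_cnj cmod_power2)
  moreover have "Re (l2inner z z) \<ge> 0" using z by (simp add: l2inner_self l2norm2_nonneg)
  ultimately have "(cmod a)\<^sup>2 / n \<le> l2norm2 x" by simp
  then show ?thesis
    using n unfolding a_def n_def by (simp add: field_simps)
qed

lemma norm_l2inner_le: "x \<in> l2 \<Longrightarrow> y \<in> l2 \<Longrightarrow> cmod (l2inner x y) \<le> l2norm x * l2norm y"
  using real_sqrt_le_mono[OF l2inner_Cauchy_Schwarz[of x y]]
  by (simp add: l2norm_eq_sqrt real_sqrt_mult)

lemma l2norm2_add: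
  assumes x: "x \<in> l2" and y: "y \<in> l2"
  shows "l2norm2 (x + y) = l2norm2 x + l2norm2 y + 2 * Re (l2inner x y)"
proof -
  have "l2inner (x + y) (x + y) = l2inner x x + l2inner y y + (l2inner x y + cnj (l2inner x y))"
    using x y l2inner_commute[OF x y] by (simp add: l2inner_add_left l2inner_add_right)
  then have "Re (l2inner (x + y) (x + y))
      = Re (l2inner x x) + Re (l2inner y y) + 2 * Re (l2inner x y)"
    by simp
  then show ?thesis
    using x y by (simp add: l2inner_self)
qed

lemma l2norm_triangle: "x \<in> l2 \<Longrightarrow> y \<in> l2 \<Longrightarrow> l2norm (x + y) \<le> l2norm x + l2norm y"
proof -
  assume x: "x \<in> l2" and y: "y \<in> l2"
  have "Re (l2inner x y) \<le> l2norm x * l2norm y"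
    using norm_l2inner_le[OF x y] complex_Re_le_cmod order_trans by blast
  then have "l2norm2 (x + y) \<le> (l2norm x + l2norm y)\<^sup>2"
    using x y l2norm2_nonneg[OF x] l2norm2_nonneg[OF y]
    by (simp add: l2norm2_add power2_sum l2norm_eq_sqrt)
  then show ?thesis
    using real_sqrt_le_mono l2norm_nonneg[OF x] l2norm_nonneg[OF y]
    by (fastforce simp: l2norm_eq_sqrt)
qed

lemma l2norm2_cscale: "x \<in> l2 \<Longrightarrow> l2norm2 (cscale c x) = (cmod c)\<^sup>2 * l2norm2 x"
proof -
  assume x: "x \<in> l2"
  have "l2inner (cscale c x) (cscale c x) = c * cnj c * l2inner x x"
    using x by (simp add: l2inner_cscale_left l2inner_cscale_right)
  then have "Re (l2inner (cscale c x) (cscale c x)) = (cmod c)\<^sup>2 * Re (l2inner x x)"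
    by (simp add: complex_norm_square[symmetric] del: complex_norm_square)
  then show ?thesis
    using x by (simp add: l2inner_self)
qed

lemma l2norm_cscale: "x \<in> l2 \<Longrightarrow> l2norm (cscale c x) = cmod c * l2norm x"
  by (simp add: l2norm_eq_sqrt l2norm2_cscale real_sqrt_mult)

lemma l2norm_sum: "(\<And>i. i \<in> A \<Longrightarrow> f i \<in> l2) \<Longrightarrow> l2norm (sum f A) \<le> (\<Sum>i\<in>A. l2norm (f i))"
proof (induction A rule: infinite_finite_induct)
  case (insert a A)
  have "l2norm (sum f (insert a A)) = l2norm (f a + sum f A)"
    using insert(1,2) by simp
  also have "\<dots> \<le> l2norm (f a) + l2norm (sum f A)"
    using insert by (intro l2norm_triangle l2_sum) auto
  also have "\<dots> \<le> l2norm (f a) + (\<Sum>i\<in>A. l2norm (f i))"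
    using insert by auto
  finally show ?case
    using sum.insert[OF insert(1,2), of "\<lambda>i. l2norm (f i)"] by linarith
qed (simp_all add: l2norm_def)

lemma l2norm2_unit_vec: "unit_vec x \<Longrightarrow> l2norm2 x = 1"
  using l2inner_self[of x] by (simp add: unit_vec_def)

lemma unit_vec_normalize:
  assumes x: "x \<in> l2" "x \<noteq> 0"
  obtains u where "unit_vec u" "x = cscale (complex_of_real (l2norm x)) u" "l2norm x > 0"
proof
  define n where "n = l2norm x"
  have n: "n > 0"
    using l2norm2_nonneg[OF x(1)] l2norm2_eq_0D[OF x(1)] x(2) unfolding n_def l2norm_eq_sqrt
    by force
  define u where "u = cscale (complex_of_real (1 / n)) x"
  have "l2norm2 u = 1"
    unfolding u_def using x n l2norm2_nonneg[OF x(1)]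
    by (simp add: l2norm2_cscale norm_divide power_divide l2norm_eq_sqrt n_def)
  then show "unit_vec u"
    unfolding u_def using x by (simp add: unit_vec_def l2inner_self)
  show "x = cscale (complex_of_real (l2norm x)) u"
    using n unfolding u_def n_def by (simp add: cscale_def fun_eq_iff)
  show "l2norm x > 0" using n unfolding n_def .
qed

lemma cmod_l2inner_commute: "x \<in> l2 \<Longrightarrow> y \<in> l2 \<Longrightarrow> cmod (l2inner x y) = cmod (l2inner y x)"
  using l2inner_commute[of x y] by simp

lemma cmod_l2inner_unit_vec_le: "unit_vec x \<Longrightarrow> unit_vec y \<Longrightarrow> (cmod (l2inner x y))\<^sup>2 \<le> 1"
  using l2inner_Cauchy_Schwarz[of x y] by (simp add: unit_vec_def l2norm2_unit_vec)

lemma l2_eqI: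
  assumes "x \<in> l2" "y \<in> l2" "\<And>z. z \<in> l2 \<Longrightarrow> l2inner x z = l2inner y z"
  shows "x = y"
proof -
  have "l2inner (x - y) (x - y) = 0"
    using assms by (simp add: l2inner_diff_left)
  then show ?thesis
    using assms l2inner_self_eq_0D[of "x - y"] by simp
qed

interpretation V: vector_space cscale
  by unfold_locales (auto simp: fun_eq_iff algebra_simps cscale_apply)

lemma sum_cscale_apply: "(\<Sum>v\<in>S. cscale (u v) (g v)) = (\<lambda>n. \<Sum>v\<in>S. u v * g v n)"
  by (simp add: fun_eq_iff sum_apply cscale_apply)

lemma subspace_l2: "V.subspace l2"
  by (auto simp: V.subspace_def)

lemma span_subset_l2: "E \<subseteq> l2 \<Longrightarrow> V.span E \<subseteq> l2"
  using V.span_minimal subspace_l2 by blast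

lemma cspan_eq_span: "finite B \<Longrightarrow> cspan B = V.span B"
  by (auto simp: cspan_def V.span_finite sum_cscale_apply)

lemma clin_indep_iff: "clin_indep B \<longleftrightarrow> finite B \<and> V.independent B"
proof (cases "finite B")
  case True
  then show ?thesis
    unfolding clin_indep_def V.dependent_finite[OF True] sum_cscale_apply
    by (auto simp: zero_fun_def)
qed (simp add: clin_indep_def)

lemma l2inner_lincomb_left:
  "(\<And>v. v \<in> S \<Longrightarrow> v \<in> l2) \<Longrightarrow> y \<in> l2 \<Longrightarrow>
    l2inner (\<Sum>v\<in>S. cscale (u v) v) y = (\<Sum>v\<in>S. u v * l2inner v y)"
  by (simp add: l2inner_sum_left l2inner_cscale_left)

definition orthonormal :: "vec set \<Rightarrow> bool" where
  "orthonormal E \<longleftrightarrow> E \<subseteq> l2 \<and> (\<forall>e\<in>E. l2inner e e = 1) \<and>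
     (\<forall>e\<in>E. \<forall>f\<in>E. e \<noteq> f \<longrightarrow> l2inner e f = 0)"

lemma orthonormal_l2inner:
  "orthonormal E \<Longrightarrow> e \<in> E \<Longrightarrow> f \<in> E \<Longrightarrow> l2inner e f = (if e = f then 1 else 0)"
  by (auto simp: orthonormal_def)

lemma orthonormal_subset: "orthonormal E \<Longrightarrow> F \<subseteq> E \<Longrightarrow> orthonormal F"
  unfolding orthonormal_def by blast

lemma orthonormal_singleton: "unit_vec t \<Longrightarrow> orthonormal {t}"
  by (simp add: orthonormal_def unit_vec_def)

lemma sum_orthonormal_l2inner:
  assumes "orthonormal E" "finite E" "f \<in> E"
  shows "(\<Sum>e\<in>E. u e * l2inner e f) = u f"
proof -
  have "(\<Sum>e\<in>E. u e * l2inner e f) = (\<Sum>e\<in>E. if e = f then u f else 0)"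
    using assms by (intro sum.cong) (auto simp: orthonormal_l2inner)
  then show ?thesis using assms by simp
qed

lemma orthonormal_expansion:
  assumes E: "orthonormal E" "finite E" and y: "y \<in> V.span E"
  shows "y = (\<Sum>e\<in>E. cscale (l2inner y e) e)"
proof -
  obtain u where u: "y = (\<Sum>v\<in>E. cscale (u v) v)"
    using y V.span_finite[OF E(2)] by auto
  have "l2inner y e = u e" if "e \<in> E" for e
    unfolding u using E that by (simp add: l2inner_lincomb_left sum_orthonormal_l2inner
        orthonormal_def subset_iff)
  then show ?thesis unfolding u by (intro sum.cong) auto
qed

lemma orthonormal_independent:
  assumes E: "orthonormal E" "finite E"
  shows "V.independent E"
proof (rule V.independent_if_scalars_zero[OF E(2)])
  fix u x assume s: "(\<Sum>x\<in>E. cscale (u x) x) = 0" and x: "x \<in> E"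
  have "l2inner (\<Sum>x\<in>E. cscale (u x) x) x = u x"
    using E x by (simp add: l2inner_lincomb_left sum_orthonormal_l2inner orthonormal_def subset_iff)
  then show "u x = 0" using s by simp
qed

section \<open>Bounded and selfadjoint finite-rank operators\<close>

lemma bounded_op_l2: "bounded_op T \<Longrightarrow> x \<in> l2 \<Longrightarrow> T x \<in> l2"
  by (simp add: bounded_op_def)

lemma bounded_op_outside: "bounded_op T \<Longrightarrow> x \<notin> l2 \<Longrightarrow> T x = 0"
  by (simp add: bounded_op_def zero_fun_def)

lemma bounded_op_linear:
  "bounded_op T \<Longrightarrow> x \<in> l2 \<Longrightarrow> y \<in> l2 \<Longrightarrow>
    T (cscale a x + cscale b y) = cscale a (T x) + cscale b (T y)"
  unfolding bounded_op_def by (auto simp: cscale_def plus_fun_def)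

lemma bounded_op_add: "bounded_op T \<Longrightarrow> x \<in> l2 \<Longrightarrow> y \<in> l2 \<Longrightarrow> T (x + y) = T x + T y"
  using bounded_op_linear[of T x y 1 1] by (simp add: cscale_def)

lemma bounded_op_cscale: "bounded_op T \<Longrightarrow> x \<in> l2 \<Longrightarrow> T (cscale a x) = cscale a (T x)"
  using bounded_op_linear[of T x x a 0] by (simp add: cscale_def zero_fun_def[symmetric])

lemma bounded_op_zero: "bounded_op T \<Longrightarrow> T 0 = 0"
  using bounded_op_cscale[of T 0 0] by (simp add: cscale_def zero_fun_def)

lemma subspace_range_bounded_op: "bounded_op T \<Longrightarrow> V.subspace (T ` l2)"
  unfolding V.subspace_def
proof (intro conjI ballI allI)
  assume T: "bounded_op T"
  show "0 \<in> T ` l2" using bounded_op_zero[OF T] by (metis image_eqI l2_zero)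
  fix x y assume "x \<in> T ` l2" "y \<in> T ` l2"
  then obtain x' y' where "x' \<in> l2" "y' \<in> l2" "x = T x'" "y = T y'" by auto
  then show "x + y \<in> T ` l2" using bounded_op_add[OF T] by (metis image_eqI l2_add)
next
  fix c x assume T: "bounded_op T" and "x \<in> T ` l2"
  then obtain x' where "x' \<in> l2" "x = T x'" by auto
  then show "cscale c x \<in> T ` l2" using bounded_op_cscale[OF T] by (metis image_eqI l2_cscale)
qed

definition op_lincomb :: "real \<Rightarrow> op \<Rightarrow> real \<Rightarrow> op \<Rightarrow> op" where
  "op_lincomb a S b T = op_add (op_scale a S) (op_scale b T)"

lemma op_lincomb_apply:
  "op_lincomb a S b T x = cscale (complex_of_real a) (S x) + cscale (complex_of_real b) (T x)"
  by (simp add: op_lincomb_def op_add_def op_scale_def cscale_def fun_eq_iff)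

lemma op_lincomb_fun:
  "op_lincomb a X b Y = (\<lambda>x n. complex_of_real a * X x n + complex_of_real b * Y x n)"
  by (simp add: op_lincomb_def op_add_def op_scale_def)

lemma bounded_op_lincomb:
  assumes S: "bounded_op S" and T: "bounded_op T"
  shows "bounded_op (op_lincomb a S b T)"
proof -
  obtain C1 where C1: "\<forall>x\<in>l2. l2norm (S x) \<le> C1 * l2norm x"
    using S by (auto simp: bounded_op_def)
  obtain C2 where C2: "\<forall>x\<in>l2. l2norm (T x) \<le> C2 * l2norm x"
    using T by (auto simp: bounded_op_def)
  have l2: "\<forall>x\<in>l2. op_lincomb a S b T x \<in> l2"
    using S T by (simp add: op_lincomb_apply bounded_op_l2)
  have out: "\<forall>x. x \<notin> l2 \<longrightarrow> op_lincomb a S b T x = (\<lambda>n. 0)"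
    using S T by (simp add: op_lincomb_apply bounded_op_outside cscale_def zero_fun_def)
  have lin: "op_lincomb a S b T (\<lambda>n. \<alpha> * x n + \<beta> * y n)
      = (\<lambda>n. \<alpha> * op_lincomb a S b T x n + \<beta> * op_lincomb a S b T y n)"
    if "x \<in> l2" "y \<in> l2" for x y \<alpha> \<beta>
  proof -
    have e: "(\<lambda>n. \<alpha> * x n + \<beta> * y n) = cscale \<alpha> x + cscale \<beta> y"
      by (simp add: fun_eq_iff cscale_def)
    show ?thesis
      unfolding e op_lincomb_apply using that bounded_op_linear[OF S] bounded_op_linear[OF T]
      by (simp add: fun_eq_iff cscale_def algebra_simps)
  qed
  have bnd: "l2norm (op_lincomb a S b T x) \<le> (\<bar>a\<bar> * C1 + \<bar>b\<bar> * C2) * l2norm x"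
    if x: "x \<in> l2" for x
  proof -
    have "l2norm (op_lincomb a S b T x)
        \<le> l2norm (cscale (complex_of_real a) (S x)) + l2norm (cscale (complex_of_real b) (T x))"
      unfolding op_lincomb_apply using x S T by (intro l2norm_triangle) (auto simp: bounded_op_l2)
    also have "\<dots> = \<bar>a\<bar> * l2norm (S x) + \<bar>b\<bar> * l2norm (T x)"
      using x S T by (simp add: l2norm_cscale bounded_op_l2)
    also have "\<dots> \<le> \<bar>a\<bar> * (C1 * l2norm x) + \<bar>b\<bar> * (C2 * l2norm x)"
      using C1 C2 x by (intro add_mono mult_left_mono) auto
    finally show ?thesis by (simp add: algebra_simps)
  qed
  show ?thesis unfolding bounded_op_def using l2 out lin bnd by blast
qed

lemma selfadjoint_op_lincomb:
  assumes S: "selfadjoint_op S" and T: "selfadjoint_op T"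
  shows "selfadjoint_op (op_lincomb a S b T)"
proof -
  have bS: "bounded_op S" and bT: "bounded_op T" using S T by (auto simp: selfadjoint_op_def)
  have "l2inner (op_lincomb a S b T x) y = l2inner x (op_lincomb a S b T y)"
    if "x \<in> l2" "y \<in> l2" for x y
  proof -
    have "l2inner (op_lincomb a S b T x) y
        = of_real a * l2inner (S x) y + of_real b * l2inner (T x) y"
      unfolding op_lincomb_apply using that bS bT
      by (simp add: l2inner_add_left l2inner_cscale_left bounded_op_l2)
    also have "\<dots> = of_real a * l2inner x (S y) + of_real b * l2inner x (T y)"
      using S T that by (simp add: selfadjoint_op_def)
    also have "\<dots> = l2inner x (op_lincomb a S b T y)"
      unfolding op_lincomb_apply using that bS bT
      by (simp add: l2inner_add_right l2inner_cscale_right bounded_op_l2)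
    finally show ?thesis .
  qed
  then show ?thesis using bounded_op_lincomb[OF bS bT] by (simp add: selfadjoint_op_def)
qed

lemma finite_rank_range_span: "finite_rank T \<Longrightarrow> \<exists>B. finite B \<and> B \<subseteq> l2 \<and> T ` l2 = V.span B"
proof -
  assume "finite_rank T"
  then obtain B where B: "B \<subseteq> l2" "clin_indep B" "T ` l2 = cspan B"
    unfolding finite_rank_def has_rank_def by auto
  then have "finite B" by (simp add: clin_indep_iff)
  then show ?thesis using B by (intro exI[of _ B]) (simp add: cspan_eq_span)
qed

lemma finite_rank_if_range_in_span:
  assumes T: "bounded_op T" and B: "finite B" "T ` l2 \<subseteq> V.span B"
  shows "finite_rank T"
proof -
  obtain C where C: "C \<subseteq> T ` l2" "V.independent C" "T ` l2 \<subseteq> V.span C"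
    using V.basis_exists by metis
  have fC: "finite C" using V.independent_span_bound[OF B(1) C(2)] C(1) B(2) by auto
  have "V.span C = T ` l2"
    using V.span_minimal[OF C(1) subspace_range_bounded_op[OF T]] C(3) by auto
  moreover have "C \<subseteq> l2" using C(1) bounded_op_l2[OF T] by auto
  ultimately show ?thesis unfolding finite_rank_def has_rank_def
    using fC C(2) by (auto simp: cspan_eq_span clin_indep_iff)
qed

lemma finite_rank_op_lincomb:
  assumes S: "bounded_op S" "finite_rank S" and T: "bounded_op T" "finite_rank T"
  shows "finite_rank (op_lincomb a S b T)"
proof -
  obtain BS where BS: "finite BS" "S ` l2 = V.span BS" using finite_rank_range_span[OF S(2)] by auto
  obtain BT where BT: "finite BT" "T ` l2 = V.span BT" using finite_rank_range_span[OF T(2)] by auto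
  have "op_lincomb a S b T ` l2 \<subseteq> V.span (BS \<union> BT)"
  proof
    fix y assume "y \<in> op_lincomb a S b T ` l2"
    then obtain x where x: "x \<in> l2" "y = op_lincomb a S b T x" by auto
    have "S x \<in> V.span (BS \<union> BT)" using BS x V.span_mono[of BS "BS \<union> BT"] by auto
    moreover have "T x \<in> V.span (BS \<union> BT)" using BT x V.span_mono[of BT "BS \<union> BT"] by auto
    ultimately show "y \<in> V.span (BS \<union> BT)" unfolding x op_lincomb_apply
      by (intro V.span_add V.span_scale)
  qed
  then show ?thesis
    using BS BT finite_rank_if_range_in_span[OF bounded_op_lincomb[OF S(1) T(1)], of "BS \<union> BT"]
    by auto
qed

lemma Fsa_op_lincomb: "S \<in> Fsa \<Longrightarrow> T \<in> Fsa \<Longrightarrow> op_lincomb a S b T \<in> Fsa"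
proof -
  assume "S \<in> Fsa" "T \<in> Fsa"
  then have S: "selfadjoint_op S" "finite_rank S" "bounded_op S"
    and T: "selfadjoint_op T" "finite_rank T" "bounded_op T"
    by (auto simp: Fsa_def selfadjoint_op_def)
  show ?thesis unfolding Fsa_def
    using selfadjoint_op_lincomb[OF S(1) T(1)] finite_rank_op_lincomb[OF S(3,2) T(3,2)] by blast
qed


section \<open>Finite-rank orthogonal projections\<close>

text \<open>For orthonormal F this is the projection onto the span of F; for a single vector z of
  norm n it is n^2 times the projection onto z.\<close>

definition orth_proj :: "vec set \<Rightarrow> op" where
  "orth_proj F = (\<lambda>x. if x \<in> l2 then (\<Sum>f\<in>F. cscale (l2inner x f) f) else 0)"

lemma orth_proj_apply: "x \<in> l2 \<Longrightarrow> orth_proj F x = (\<Sum>f\<in>F. cscale (l2inner x f) f)"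
  by (simp add: orth_proj_def)

lemma orth_proj_outside: "x \<notin> l2 \<Longrightarrow> orth_proj F x = 0"
  by (simp add: orth_proj_def)

lemma orth_proj_l2: "F \<subseteq> l2 \<Longrightarrow> orth_proj F x \<in> l2"
  by (auto simp: orth_proj_def intro!: l2_sum)

lemma bounded_orth_proj:
  assumes F: "F \<subseteq> l2"
  shows "bounded_op (orth_proj F)"
proof -
  have lin: "orth_proj F (\<lambda>n. a * x n + b * y n) = (\<lambda>n. a * orth_proj F x n + b * orth_proj F y n)"
    if x: "x \<in> l2" and y: "y \<in> l2" for x y a b
  proof -
    have e: "(\<lambda>n. a * x n + b * y n) = cscale a x + cscale b y" by (simp add: fun_eq_iff cscale_def)
    have "\<And>f. f \<in> F \<Longrightarrow> l2inner (cscale a x + cscale b y) f = a * l2inner x f + b * l2inner y f"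
      using F x y by (auto simp: l2inner_add_left l2inner_cscale_left)
    then have "orth_proj F (\<lambda>n. a * x n + b * y n)
        = (\<Sum>f\<in>F. cscale (a * l2inner x f + b * l2inner y f) f)"
      unfolding e using x y by (simp add: orth_proj_apply)
    also have "\<dots> = (\<lambda>n. a * orth_proj F x n + b * orth_proj F y n)"
      using x y by (simp add: orth_proj_apply sum_cscale_apply fun_eq_iff sum_distrib_left
          sum.distrib algebra_simps)
    finally show ?thesis .
  qed
  have bnd: "l2norm (orth_proj F x) \<le> (\<Sum>f\<in>F. (l2norm f)\<^sup>2) * l2norm x" if x: "x \<in> l2" for x
  proof -
    have "l2norm (orth_proj F x) \<le> (\<Sum>f\<in>F. l2norm (cscale (l2inner x f) f))"
      unfolding orth_proj_apply[OF x] using F x by (intro l2norm_sum) auto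
    also have "\<dots> = (\<Sum>f\<in>F. cmod (l2inner x f) * l2norm f)"
      using F by (intro sum.cong) (auto simp: l2norm_cscale)
    also have "\<dots> \<le> (\<Sum>f\<in>F. (l2norm x * l2norm f) * l2norm f)"
      using F x norm_l2inner_le by (intro sum_mono mult_right_mono) (auto simp: l2norm_nonneg)
    also have "\<dots> = (\<Sum>f\<in>F. (l2norm f)\<^sup>2) * l2norm x"
      by (simp add: sum_distrib_left power2_eq_square mult_ac)
    finally show ?thesis .
  qed
  have "\<exists>C. \<forall>x\<in>l2. l2norm (orth_proj F x) \<le> C * l2norm x" using bnd by blast
  then show ?thesis unfolding bounded_op_def
    using orth_proj_l2[OF F] lin by (auto simp: orth_proj_outside zero_fun_def)
qed

lemma selfadjoint_orth_proj:
  assumes F: "F \<subseteq> l2"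
  shows "selfadjoint_op (orth_proj F)"
proof -
  have "l2inner (orth_proj F x) y = l2inner x (orth_proj F y)"
    if x: "x \<in> l2" and y: "y \<in> l2" for x y
  proof -
    have "l2inner (orth_proj F x) y = (\<Sum>f\<in>F. l2inner x f * l2inner f y)"
      unfolding orth_proj_apply[OF x] using F y by (simp add: l2inner_lincomb_left subset_iff)
    also have "\<dots> = (\<Sum>f\<in>F. cnj (l2inner y f) * l2inner x f)"
      using F x y by (intro sum.cong) (auto simp: l2inner_commute[of y] mult.commute)
    also have "\<dots> = l2inner x (orth_proj F y)"
      unfolding orth_proj_apply[OF y] using F x
      by (simp add: l2inner_sum_right l2inner_cscale_right subset_iff)
    finally show ?thesis .
  qed
  then show ?thesis using bounded_orth_proj[OF F] by (simp add: selfadjoint_op_def)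
qed

lemma orth_proj_in_span: "F \<subseteq> l2 \<Longrightarrow> orth_proj F x \<in> V.span F"
proof -
  assume F: "F \<subseteq> l2"
  show ?thesis
  proof (cases "x \<in> l2")
    case True
    then show ?thesis unfolding orth_proj_apply[OF True]
      by (intro V.span_sum V.span_scale) (auto intro: V.span_base)
  qed (simp add: orth_proj_outside V.span_zero)
qed

lemma orth_proj_fixes_span:
  assumes "orthonormal F" "finite F" "y \<in> V.span F"
  shows "orth_proj F y = y"
proof -
  have "F \<subseteq> l2" using assms by (simp add: orthonormal_def)
  then have "y \<in> l2" using span_subset_l2 assms by auto
  then show ?thesis using orthonormal_expansion[OF assms] by (simp add: orth_proj_apply)
qed

lemma range_orth_proj:
  assumes "orthonormal F" "finite F"
  shows "orth_proj F ` l2 = V.span F"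
proof
  have F: "F \<subseteq> l2" using assms by (simp add: orthonormal_def)
  show "orth_proj F ` l2 \<subseteq> V.span F" using orth_proj_in_span[OF F] by auto
  show "V.span F \<subseteq> orth_proj F ` l2"
  proof
    fix y assume y: "y \<in> V.span F"
    then have "y \<in> l2" using span_subset_l2[OF F] by auto
    then show "y \<in> orth_proj F ` l2" using orth_proj_fixes_span[OF assms y] by (metis image_eqI)
  qed
qed

lemma orth_proj_idem:
  assumes "orthonormal F" "finite F"
  shows "orth_proj F \<circ> orth_proj F = orth_proj F"
proof
  fix x
  have F: "F \<subseteq> l2" using assms by (simp add: orthonormal_def)
  show "(orth_proj F \<circ> orth_proj F) x = orth_proj F x"
    using orth_proj_fixes_span[OF assms orth_proj_in_span[OF F]] by simp
qed

lemma orth_proj_in_Proj: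
  assumes "orthonormal F" "finite F"
  shows "orth_proj F \<in> Proj (card F)"
proof -
  have F: "F \<subseteq> l2" using assms by (simp add: orthonormal_def)
  have "has_rank (orth_proj F) (card F)"
    unfolding has_rank_def using F assms orthonormal_independent[OF assms] range_orth_proj[OF assms]
    by (intro exI[of _ F]) (simp add: clin_indep_iff cspan_eq_span)
  then show ?thesis unfolding Proj_def
    using selfadjoint_orth_proj[OF F] orth_proj_idem[OF assms] by simp
qed

lemma Fsa_orth_proj:
  assumes F: "finite F" "F \<subseteq> l2"
  shows "orth_proj F \<in> Fsa"
proof -
  have "finite_rank (orth_proj F)"
    using F orth_proj_in_span[OF F(2)]
    by (intro finite_rank_if_range_in_span[OF bounded_orth_proj[OF F(2)], of F]) auto
  then show ?thesis using selfadjoint_orth_proj[OF F(2)] by (simp add: Fsa_def)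
qed

lemma Proj_subset_Fsa: "Proj k \<subseteq> Fsa"
  by (auto simp: Proj_def Fsa_def finite_rank_def)

lemma orth_proj_singleton: "x \<in> l2 \<Longrightarrow> orth_proj {t} x = cscale (l2inner x t) t"
  by (simp add: orth_proj_apply)

lemma orth_proj_in_Proj1: "unit_vec t \<Longrightarrow> orth_proj {t} \<in> Proj 1"
  using orth_proj_in_Proj[OF orthonormal_singleton] by fastforce

lemma Proj1_orth_proj:
  assumes P: "P \<in> Proj 1"
  obtains r where "unit_vec r" "P = orth_proj {r}"
proof -
  have sa: "selfadjoint_op P" and idem: "P \<circ> P = P" and rk: "has_rank P 1"
    using P by (auto simp: Proj_def)
  have bP: "bounded_op P" using sa by (simp add: selfadjoint_op_def)
  obtain B where B: "B \<subseteq> l2" "clin_indep B" "card B = 1" "P ` l2 = cspan B"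
    using rk unfolding has_rank_def by auto
  obtain b where b: "B = {b}" using B(3) card_1_singletonE by blast
  have bl2: "b \<in> l2" and "b \<noteq> 0" and range_P: "P ` l2 = V.span {b}"
    using B b by (auto simp: clin_indep_iff cspan_eq_span)
  then obtain r where r: "unit_vec r" and br: "b = cscale (complex_of_real (l2norm b)) r"
    and nb: "l2norm b > 0"
    using unit_vec_normalize by blast
  have rl2: "r \<in> l2" using r by (simp add: unit_vec_def)
  have "r = cscale (complex_of_real (1 / l2norm b)) b"
    using nb by (subst br) (simp add: cscale_def fun_eq_iff)
  then have "r \<in> P ` l2"
    unfolding range_P by (simp add: V.span_base V.span_scale)
  then obtain y where "y \<in> l2" "r = P y" by auto
  then have Pr: "P r = r" using idem by (metis comp_apply)
  have "P x = cscale (l2inner x r) r" if x: "x \<in> l2" for x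
  proof -
    obtain c where "P x = cscale c b"
      using range_P x by (auto simp: V.span_singleton)
    then have c: "P x = cscale (c * complex_of_real (l2norm b)) r"
      by (subst (asm) br) (simp add: cscale_def fun_eq_iff)
    have "l2inner (P x) r = l2inner x (P r)" using sa x rl2 by (simp add: selfadjoint_op_def)
    then have "c * complex_of_real (l2norm b) = l2inner x r"
      using Pr c rl2 r by (simp add: l2inner_cscale_left unit_vec_def)
    then show ?thesis using c by simp
  qed
  then have "P x = orth_proj {r} x" for x
    by (cases "x \<in> l2")
      (simp_all add: orth_proj_singleton orth_proj_outside bounded_op_outside[OF bP])
  then have "P = orth_proj {r}" ..
  then show ?thesis using r that by blast
qed

lemma l2inner_orth_proj_residual:
  assumes E: "orthonormal E" "finite E" and y: "y \<in> l2" and e: "e \<in> E"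
  shows "l2inner (y - orth_proj E y) e = 0"
proof -
  have El2: "E \<subseteq> l2" using E by (simp add: orthonormal_def)
  have "l2inner (orth_proj E y) e = l2inner y e"
    using E El2 y e
    by (simp add: orth_proj_apply l2inner_lincomb_left sum_orthonormal_l2inner subset_iff)
  then show ?thesis
    using l2inner_diff_left[OF y orth_proj_l2[OF El2] subsetD[OF El2 e]] by simp
qed

lemma l2norm2_orth_proj_residual:
  assumes E: "orthonormal E" "finite E" and y: "y \<in> l2"
  shows "l2norm2 y = (\<Sum>e\<in>E. (cmod (l2inner y e))\<^sup>2) + l2norm2 (y - orth_proj E y)"
proof -
  define p where "p = orth_proj E y"
  have El2: "E \<subseteq> l2" using E by (simp add: orthonormal_def)
  have p: "p \<in> l2" unfolding p_def using El2 by (rule orth_proj_l2)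
  have w: "y - p \<in> l2" using y p by simp
  have "l2inner p x = (\<Sum>e\<in>E. l2inner y e * l2inner e x)" if "x \<in> l2" for x
    using El2 y that by (simp add: p_def orth_proj_apply l2inner_lincomb_left subset_iff)
  moreover have "l2inner e (y - p) = 0" and "l2inner e p = cnj (l2inner y e)" if e: "e \<in> E" for e
  proof -
    have el: "e \<in> l2" using El2 e by blast
    have "l2inner (y - p) e = 0"
      unfolding p_def by (rule l2inner_orth_proj_residual[OF E y e])
    then show "l2inner e (y - p) = 0" and "l2inner e p = cnj (l2inner y e)"
      using l2inner_commute[OF w el] l2inner_commute[OF p el] l2inner_diff_left[OF y p el]
      by simp_all
  qed
  ultimately have pw: "l2inner p (y - p) = 0"
    and pp: "l2inner p p = (\<Sum>e\<in>E. l2inner y e * cnj (l2inner y e))"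
    using w p by (simp_all add: mult.commute)
  note pp
  also have "(\<Sum>e\<in>E. l2inner y e * cnj (l2inner y e))
      = complex_of_real (\<Sum>e\<in>E. (cmod (l2inner y e))\<^sup>2)"
    by (simp only: of_real_sum complex_norm_square)
  finally have "l2norm2 p = (\<Sum>e\<in>E. (cmod (l2inner y e))\<^sup>2)"
    using l2inner_self[OF p] by (metis of_real_eq_iff)
  then show ?thesis
    using l2norm2_add[OF p w] pw by (simp add: p_def)
qed

lemma span_insert_swap:
  assumes p: "p \<in> V.span E" and c: "c \<noteq> 0" and b: "b = p + cscale c e"
  shows "V.span (insert e E) = V.span (insert b E)"
proof -
  have E_sub: "E \<subseteq> V.span (insert x E)" for x
    using V.span_superset by blast
  have p_sub: "p \<in> V.span (insert x E)" for x
    using V.span_mono[of E "insert x E"] p by auto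
  have "cscale c e \<in> V.span (insert e E)"
    by (intro V.span_scale V.span_base) simp
  then have "b \<in> V.span (insert e E)"
    unfolding b by (rule V.span_add[OF p_sub])
  moreover have "e = cscale (1 / c) (b - p)"
    using c unfolding b by (simp add: cscale_def fun_eq_iff)
  then have "e \<in> V.span (insert b E)"
    using p_sub by (auto intro: V.span_scale V.span_diff V.span_base)
  ultimately show ?thesis
    using E_sub by (simp add: V.span_eq)
qed

lemma orthonormal_insert_span:
  assumes E: "finite E" "orthonormal E" and b: "b \<in> l2" "b \<notin> V.span E"
  obtains e where "orthonormal (insert e E)" "V.span (insert e E) = V.span (insert b E)"
proof -
  have El2: "E \<subseteq> l2" using E by (simp add: orthonormal_def)
  define p where "p = orth_proj E b"
  have p: "p \<in> V.span E" "p \<in> l2"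
    unfolding p_def using El2 by (auto intro: orth_proj_in_span orth_proj_l2)
  have "b - p \<noteq> 0" using b p by auto
  then obtain e where e: "unit_vec e" and n: "l2norm (b - p) > 0"
    and bp: "b - p = cscale (complex_of_real (l2norm (b - p))) e"
    using unit_vec_normalize b p by blast
  have el2: "e \<in> l2" using e by (simp add: unit_vec_def)
  have "l2inner (b - p) f = complex_of_real (l2norm (b - p)) * l2inner e f" if "f \<in> E" for f
    using El2 that by (subst bp) (simp add: l2inner_cscale_left el2 subset_iff)
  then have ef: "l2inner e f = 0" if "f \<in> E" for f
    using that n l2inner_orth_proj_residual[OF E(2,1) b(1)] unfolding p_def by force
  have fe: "l2inner f e = 0" if "f \<in> E" for f
    using ef[OF that] l2inner_commute[OF el2, of f] El2 that by auto
  show ?thesis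
  proof
    show "orthonormal (insert e E)"
      using E(2) e ef fe unfolding orthonormal_def unit_vec_def by auto
    show "V.span (insert e E) = V.span (insert b E)"
      by (rule span_insert_swap[OF p(1)]) (use n bp in \<open>simp_all add: algebra_simps\<close>)
  qed
qed

lemma gram_schmidt:
  assumes "finite B" "B \<subseteq> l2" "finite E" "orthonormal E"
  shows "\<exists>E'. finite E' \<and> orthonormal E' \<and> E \<subseteq> E' \<and> V.span E' = V.span (E \<union> B)"
  using assms
proof (induction B rule: finite_induct)
  case (insert b B)
  then have b: "b \<in> l2" and "B \<subseteq> l2" by auto
  then obtain E1 where E1: "finite E1" "orthonormal E1" "E \<subseteq> E1" "V.span E1 = V.span (E \<union> B)"
    using insert.IH insert.prems by blast
  have "V.span (insert b E1) = V.span (insert b (E \<union> B))"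
    using E1(4) by (metis V.span_insert)
  then have span_insert: "V.span (insert b E1) = V.span (E \<union> insert b B)"
    by simp
  show ?case
  proof (cases "b \<in> V.span E1")
    case True
    then have "V.span (insert b E1) = V.span E1"
      by (rule V.span_redundant)
    then show ?thesis
      using E1 span_insert by auto
  next
    case False
    obtain e where "orthonormal (insert e E1)" "V.span (insert e E1) = V.span (insert b E1)"
      by (rule orthonormal_insert_span[OF E1(1,2) b False])
    then show ?thesis
      using E1 span_insert by (intro exI[of _ "insert e E1"]) auto
  qed
qed auto

lemma l2inner_basis_vec: "l2inner (basis_vec i) (basis_vec j) = (if i = j then 1 else 0)"
proof -
  have "(\<lambda>n. basis_vec i n * cnj (basis_vec j n))
      = (\<lambda>n. if n = i then (if i = j then 1 else 0) else 0)"
    by (auto simp: basis_vec_def fun_eq_iff)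
  then show ?thesis
    unfolding l2inner_def using sums_single[of i "\<lambda>_. if i = j then 1 else (0::complex)"]
    by (simp add: sums_iff)
qed

lemma unit_vec_basis_vec: "unit_vec (basis_vec i)"
  by (simp add: unit_vec_def l2inner_basis_vec)

lemma orthonormal_basis_vec: "orthonormal (basis_vec ` A)"
  unfolding orthonormal_def by (auto simp: l2inner_basis_vec)

lemma inj_basis_vec: "inj basis_vec"
proof (rule injI)
  fix i j assume "basis_vec i = basis_vec j"
  then have "basis_vec i i = basis_vec j i" by simp
  then show "i = j" by (auto simp: basis_vec_def split: if_splits)
qed

lemma orthonormal_extension_exists:
  assumes z: "unit_vec z"
  obtains F where "finite F" "orthonormal (insert z F)" "z \<notin> F" "card F = k"
proof -
  let ?B = "basis_vec ` {..k}"
  have card_B: "card ?B = Suc k"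
    using inj_on_subset[OF inj_basis_vec] by (simp add: card_image)
  obtain E where E: "finite E" "orthonormal E" "z \<in> E" "V.span E = V.span ({z} \<union> ?B)"
    using gram_schmidt[of ?B "{z}"] orthonormal_singleton[OF z] by auto
  have "?B \<subseteq> V.span E" using V.span_superset[of "{z} \<union> ?B"] E(4) by auto
  then have "card ?B \<le> card E"
    using V.independent_span_bound[OF E(1) orthonormal_independent[OF orthonormal_basis_vec]]
    by auto
  then have "k \<le> card (E - {z})" using card_B E by (simp add: card_Diff_singleton)
  then obtain F where F: "F \<subseteq> E - {z}" "card F = k" "finite F"
    by (rule obtain_subset_with_card_n)
  have "orthonormal (insert z F)"
    using E(2,3) F(1) orthonormal_subset by blast
  then show ?thesis using F that by auto
qed

text \<open>In bra-ket notation, herm_pair u v c = c |u><v| + cnj c |v><u|.\<close>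

definition herm_pair :: "vec \<Rightarrow> vec \<Rightarrow> complex \<Rightarrow> op" where
  "herm_pair u v c =
     (\<lambda>y. if y \<in> l2 then cscale (c * l2inner y v) u + cscale (cnj c * l2inner y u) v else 0)"

lemma herm_pair_polarization:
  assumes u: "u \<in> l2" and v: "v \<in> l2"
  shows "herm_pair u v c =
    op_lincomb (1/2) (orth_proj {u + cscale (cnj c) v}) (-1/2) (orth_proj {u - cscale (cnj c) v})"
    (is "_ = ?D")
proof
  fix y
  show "herm_pair u v c y = ?D y"
  proof (cases "y \<in> l2")
    case True
    have "l2inner y (u + cscale (cnj c) v) = l2inner y u + c * l2inner y v"
      and "l2inner y (u - cscale (cnj c) v) = l2inner y u - c * l2inner y v"
      using u v True by (simp_all add: l2inner_add_right l2inner_diff_right l2inner_cscale_right)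
    then have "?D y =
      cscale (1/2) (cscale (l2inner y u + c * l2inner y v) (u + cscale (cnj c) v)) +
      cscale (-1/2) (cscale (l2inner y u - c * l2inner y v) (u - cscale (cnj c) v))"
      by (simp add: op_lincomb_apply orth_proj_singleton[OF True])
    also have "\<dots> = herm_pair u v c y"
      using True unfolding herm_pair_def by (simp add: cscale_def fun_eq_iff algebra_simps)
    finally show ?thesis by simp
  qed (simp add: herm_pair_def op_lincomb_fun orth_proj_outside fun_eq_iff)
qed

lemma Fsa_herm_pair: "u \<in> l2 \<Longrightarrow> v \<in> l2 \<Longrightarrow> herm_pair u v c \<in> Fsa"
  by (simp add: herm_pair_polarization Fsa_op_lincomb Fsa_orth_proj)

lemma herm_pair_Re_Im:
  "herm_pair u v c = op_lincomb (Re c) (herm_pair u v 1) (Im c) (herm_pair u v \<i>)"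
proof
  fix y
  have c: "c = complex_of_real (Re c) + \<i> * complex_of_real (Im c)"
    and cc: "cnj c = complex_of_real (Re c) - \<i> * complex_of_real (Im c)"
    by (simp_all add: complex_eq_iff)
  show "herm_pair u v c y = op_lincomb (Re c) (herm_pair u v 1) (Im c) (herm_pair u v \<i>) y"
    unfolding op_lincomb_fun herm_pair_def
    by (simp add: cscale_def fun_eq_iff, subst c, subst cc, simp add: algebra_simps)
qed
section \<open>Real spans of sets of operators\<close>

inductive_set op_span :: "op set \<Rightarrow> op set" for S where
  zero: "0 \<in> op_span S"
| step: "Q \<in> S \<Longrightarrow> T \<in> op_span S \<Longrightarrow> op_lincomb a Q 1 T \<in> op_span S"

lemma op_span_base: "Q \<in> S \<Longrightarrow> Q \<in> op_span S"
  using op_span.step[OF _ op_span.zero, of Q S 1] by (simp add: op_lincomb_fun)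

lemma op_span_scale: "Y \<in> op_span S \<Longrightarrow> op_scale b Y \<in> op_span S"
proof (induction rule: op_span.induct)
  case zero
  have e: "op_scale b 0 = 0" by (simp add: op_scale_def fun_eq_iff)
  show ?case unfolding e by (rule op_span.zero)
next
  case (step Q T a)
  have "op_scale b (op_lincomb a Q 1 T) = op_lincomb (b * a) Q 1 (op_scale b T)"
    by (simp add: op_scale_def op_lincomb_fun algebra_simps)
  then show ?case using step by (simp add: op_span.step)
qed

lemma op_span_lincomb:
  "X \<in> op_span S \<Longrightarrow> Y \<in> op_span S \<Longrightarrow> op_lincomb a X b Y \<in> op_span S"
proof (induction arbitrary: a rule: op_span.induct)
  case zero
  have e: "op_lincomb a 0 b Y = op_scale b Y" by (simp add: op_scale_def op_lincomb_fun)
  show ?case unfolding e by (rule op_span_scale[OF zero.prems])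
next
  case (step Q T c)
  have "op_lincomb a (op_lincomb c Q 1 T) b Y = op_lincomb (a * c) Q 1 (op_lincomb a T b Y)"
    by (simp add: op_lincomb_fun algebra_simps)
  then show ?case using step by (simp add: op_span.step)
qed

lemma op_span_add: "X \<in> op_span S \<Longrightarrow> Y \<in> op_span S \<Longrightarrow> X + Y \<in> op_span S"
  using op_span_lincomb[of X S Y 1 1] by (simp add: op_lincomb_fun fun_eq_iff plus_fun_def)

lemma op_span_sum: "(\<And>i. i \<in> A \<Longrightarrow> f i \<in> op_span S) \<Longrightarrow> sum f A \<in> op_span S"
  by (induction A rule: infinite_finite_induct) (auto intro: op_span_add op_span.zero)

lemma op_span_minimal:
  assumes "S \<subseteq> op_span S'"
  shows "X \<in> op_span S \<Longrightarrow> X \<in> op_span S'"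
proof (induction rule: op_span.induct)
  case (step Q T a)
  then show ?case using assms by (intro op_span_lincomb) auto
qed (rule op_span.zero)

lemma zero_Fsa: "(0::op) \<in> Fsa"
proof -
  have "orth_proj {} = 0" by (simp add: orth_proj_def fun_eq_iff)
  then show ?thesis using Fsa_orth_proj[of "{}"] by simp
qed

lemma op_span_subset_Fsa:
  assumes "S \<subseteq> Fsa"
  shows "X \<in> op_span S \<Longrightarrow> X \<in> Fsa"
proof (induction rule: op_span.induct)
  case (step Q T a)
  then show ?case using assms by (intro Fsa_op_lincomb) auto
qed (rule zero_Fsa)

lemma orth_proj_singleton_in_op_span:
  assumes z: "z \<in> l2"
  shows "orth_proj {z} \<in> op_span (Proj 1)"
proof (cases "z = 0")
  case True
  then have "orth_proj {z} = 0" by (simp add: orth_proj_def fun_eq_iff cscale_def)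
  then show ?thesis by (simp add: op_span.zero)
next
  case False
  then obtain u where u: "unit_vec u" and "z = cscale (complex_of_real (l2norm z)) u"
    using unit_vec_normalize z by blast
  then obtain n where zu: "z = cscale (complex_of_real n) u" and n: "n = l2norm z" by blast
  have "orth_proj {z} = op_lincomb (n\<^sup>2) (orth_proj {u}) 1 0"
  proof
    fix x
    show "orth_proj {z} x = op_lincomb (n\<^sup>2) (orth_proj {u}) 1 0 x"
    proof (cases "x \<in> l2")
      case True
      have "l2inner x z = complex_of_real n * l2inner x u"
        unfolding zu using True u by (simp add: l2inner_cscale_right unit_vec_def)
      then show ?thesis
        using True by (simp add: orth_proj_singleton op_lincomb_fun fun_eq_iff cscale_def
            power2_eq_square zu)
    qed (simp add: orth_proj_outside op_lincomb_fun fun_eq_iff)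
  qed
  then show ?thesis
    using orth_proj_in_Proj1[OF u] by (simp add: op_span.step op_span.zero)
qed

lemma herm_pair_in_op_span:
  assumes "u \<in> l2" "v \<in> l2"
  shows "herm_pair u v c \<in> op_span (Proj 1)"
  unfolding herm_pair_polarization[OF assms]
  by (intro op_span_lincomb orth_proj_singleton_in_op_span) (use assms in auto)

lemma selfadjoint_op_expansion_transpose:
  assumes sa: "selfadjoint_op T" and E: "finite E" "E \<subseteq> l2"
    and expand: "\<And>x. x \<in> l2 \<Longrightarrow> T x = (\<Sum>e\<in>E. cscale (l2inner (T x) e) e)"
    and x: "x \<in> l2"
  shows "T x = (\<Sum>e\<in>E. cscale (l2inner x e) (T e))"
proof (rule l2_eqI)
  have bT: "bounded_op T"
    and sa': "\<And>x y. x \<in> l2 \<Longrightarrow> y \<in> l2 \<Longrightarrow> l2inner (T x) y = l2inner x (T y)"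
    using sa by (auto simp: selfadjoint_op_def)
  have El2: "\<And>e. e \<in> E \<Longrightarrow> e \<in> l2" and TEl2: "\<And>e. e \<in> E \<Longrightarrow> T e \<in> l2"
    using E(2) bounded_op_l2[OF bT] by auto
  show "T x \<in> l2" using bounded_op_l2[OF bT x] .
  show "(\<Sum>e\<in>E. cscale (l2inner x e) (T e)) \<in> l2"
    using TEl2 by (intro l2_sum l2_cscale)
  fix y assume y: "y \<in> l2"
  have Ty: "T y \<in> l2" using bounded_op_l2[OF bT y] .
  have "l2inner (T x) y = l2inner x (T y)" by (rule sa'[OF x y])
  also have "\<dots> = l2inner x (\<Sum>e\<in>E. cscale (l2inner (T y) e) e)"
    by (rule arg_cong[OF expand[OF y]])
  also have "\<dots> = (\<Sum>e\<in>E. cnj (l2inner (T y) e) * l2inner x e)"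
    using x El2 by (simp add: l2inner_sum_right l2inner_cscale_right)
  also have "\<dots> = (\<Sum>e\<in>E. l2inner x e * l2inner (T e) y)"
  proof (rule sum.cong[OF refl])
    fix e assume e: "e \<in> E"
    have "cnj (l2inner (T y) e) = l2inner (T e) y"
      using l2inner_commute[OF El2[OF e] Ty] sa'[OF El2[OF e] y] by simp
    then show "cnj (l2inner (T y) e) * l2inner x e = l2inner x e * l2inner (T e) y"
      by simp
  qed
  also have "\<dots> = l2inner (\<Sum>e\<in>E. cscale (l2inner x e) (T e)) y"
    using y TEl2 by (simp add: l2inner_sum_left l2inner_cscale_left)
  finally show "l2inner (T x) y = l2inner (\<Sum>e\<in>E. cscale (l2inner x e) (T e)) y" .
qed

lemma selfadjoint_finite_rank_expansion:
  assumes T: "T \<in> Fsa"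
  obtains E where "finite E" "orthonormal E"
    "\<And>x. x \<in> l2 \<Longrightarrow> T x = (\<Sum>e\<in>E. cscale (l2inner x (T e)) e)"
    "\<And>x. x \<in> l2 \<Longrightarrow> T x = (\<Sum>e\<in>E. cscale (l2inner x e) (T e))"
proof -
  have sa: "selfadjoint_op T" and fr: "finite_rank T" using T by (auto simp: Fsa_def)
  obtain B where B: "finite B" "B \<subseteq> l2" "T ` l2 = V.span B"
    using finite_rank_range_span[OF fr] by auto
  obtain E where E: "finite E" "orthonormal E" "V.span E = V.span B"
    using gram_schmidt[OF B(1,2), of "{}"] by (auto simp: orthonormal_def)
  have El2: "E \<subseteq> l2" using E by (simp add: orthonormal_def)
  have expand: "T x = (\<Sum>e\<in>E. cscale (l2inner (T x) e) e)" if "x \<in> l2" for x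
  proof (rule orthonormal_expansion[OF E(2,1)])
    show "T x \<in> V.span E" unfolding E(3) B(3)[symmetric] using that by (rule imageI)
  qed
  have "T x = (\<Sum>e\<in>E. cscale (l2inner x (T e)) e)" if x: "x \<in> l2" for x
  proof -
    have "T x = (\<Sum>e\<in>E. cscale (l2inner (T x) e) e)" by (rule expand[OF x])
    also have "\<dots> = (\<Sum>e\<in>E. cscale (l2inner x (T e)) e)"
      using sa x El2 by (intro sum.cong) (auto simp: selfadjoint_op_def)
    finally show ?thesis .
  qed
  then show ?thesis
    using selfadjoint_op_expansion_transpose[OF sa E(1) El2 expand] by (rule that[OF E(1,2)])
qed

lemma Fsa_in_op_span_Proj1:
  assumes T: "T \<in> Fsa"
  shows "T \<in> op_span (Proj 1)"
proof -
  obtain E where E: "finite E" "orthonormal E"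
    and exp1: "\<And>x. x \<in> l2 \<Longrightarrow> T x = (\<Sum>e\<in>E. cscale (l2inner x (T e)) e)"
    and exp2: "\<And>x. x \<in> l2 \<Longrightarrow> T x = (\<Sum>e\<in>E. cscale (l2inner x e) (T e))"
    using selfadjoint_finite_rank_expansion[OF T] by blast
  have bT: "bounded_op T" using T by (simp add: Fsa_def selfadjoint_op_def)
  have El2: "\<And>e. e \<in> E \<Longrightarrow> e \<in> l2" and TEl2: "\<And>e. e \<in> E \<Longrightarrow> T e \<in> l2"
    using E bounded_op_l2[OF bT] by (auto simp: orthonormal_def)
  define D where "D = (\<Sum>e\<in>E. op_scale (1/2) (herm_pair e (T e) 1))"
  have "T x = D x" for x
  proof (cases "x \<in> l2")
    case True
    have "D x = cscale (1/2)
        ((\<Sum>e\<in>E. cscale (l2inner x (T e)) e) + (\<Sum>e\<in>E. cscale (l2inner x e) (T e)))"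
      using True by (simp add: D_def herm_pair_def op_scale_def sum_apply fun_eq_iff cscale_def
          add_divide_distrib sum.distrib sum_divide_distrib algebra_simps)
    also have "\<dots> = cscale (1/2) (T x + T x)"
      using exp1[OF True] exp2[OF True] by simp
    finally have "D x = cscale (1/2) (T x + T x)" .
    then show ?thesis by (simp add: cscale_def fun_eq_iff)
  qed (simp add: D_def sum_apply op_scale_def herm_pair_def bounded_op_outside[OF bT] fun_eq_iff)
  moreover have "D \<in> op_span (Proj 1)"
    unfolding D_def using El2 TEl2
    by (intro op_span_sum op_span_scale herm_pair_in_op_span)
  ultimately show ?thesis by (metis ext)
qed

lemma orth_proj_singleton_eq_combination:
  assumes F: "finite F" "orthonormal (insert z F)" "z \<notin> F" "card F = k" and k: "k \<ge> 1"
  shows "orth_proj {z} =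
    op_lincomb (1 / real k) (\<Sum>f\<in>F. orth_proj (insert z (F - {f}))) (- (real k - 1) / real k)
      (orth_proj F)" (is "_ = ?D")
proof
  fix x
  show "orth_proj {z} x = ?D x"
  proof (cases "x \<in> l2")
    case True
    show ?thesis
    proof
      fix n
      define h where "h g = l2inner x g * g n" for g
      define S where "S = (\<Sum>g\<in>F. h g)"
      have "orth_proj (insert z (F - {f})) x n = h z + (S - h f)" if f: "f \<in> F" for f
        using True F f unfolding S_def h_def
        by (simp add: orth_proj_apply sum_apply cscale_def sum_diff1)
      then have s1: "(\<Sum>f\<in>F. orth_proj (insert z (F - {f}))) x n
          = of_nat k * h z + (of_nat k * S - S)"
        using F(4) by (simp add: sum_apply sum.distrib sum_subtractf S_def)
      have s2: "orth_proj F x n = S"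
        using True unfolding S_def h_def by (simp add: orth_proj_apply sum_apply cscale_def)
      have "?D x n = complex_of_real (1 / real k) * (of_nat k * h z + (of_nat k * S - S))
          + complex_of_real (- (real k - 1) / real k) * S"
        unfolding op_lincomb_fun s1 s2 ..
      also have "\<dots> = h z"
        using k by (simp add: field_simps)
      finally have "?D x n = h z" .
      then show "orth_proj {z} x n = ?D x n"
        using True by (simp add: orth_proj_singleton cscale_def h_def)
    qed
  qed (simp add: sum_apply op_lincomb_fun orth_proj_outside fun_eq_iff)
qed

lemma orth_proj_singleton_in_op_span_Proj:
  assumes z: "unit_vec z" and k: "k \<ge> 1"
  shows "orth_proj {z} \<in> op_span (Proj k)"
proof -
  obtain F where F: "finite F" "orthonormal (insert z F)" "z \<notin> F" "card F = k"
    using orthonormal_extension_exists[OF z] by blast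
  have "orth_proj (insert z (F - {f})) \<in> Proj k" if f: "f \<in> F" for f
  proof -
    have "orthonormal (insert z (F - {f}))"
      by (rule orthonormal_subset[OF F(2)]) auto
    moreover have "card (insert z (F - {f})) = k"
      using F f k by (simp add: card_Diff_singleton)
    ultimately show ?thesis
      using orth_proj_in_Proj[of "insert z (F - {f})"] F(1) by simp
  qed
  moreover have "orthonormal F"
    by (rule orthonormal_subset[OF F(2)]) auto
  then have "orth_proj F \<in> Proj k"
    using orth_proj_in_Proj F(1,4) by blast
  ultimately show ?thesis
    unfolding orth_proj_singleton_eq_combination[OF F k]
    by (intro op_span_lincomb op_span_sum op_span_base)
qed

lemma Fsa_eq_op_span_Proj:
  assumes k: "k \<ge> 1"
  shows "Fsa = op_span (Proj k)"
proof
  show "op_span (Proj k) \<subseteq> Fsa"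
    using op_span_subset_Fsa[OF Proj_subset_Fsa] by auto
  have "Proj 1 \<subseteq> op_span (Proj k)"
  proof
    fix P assume "P \<in> Proj 1"
    then obtain r where "unit_vec r" "P = orth_proj {r}" by (rule Proj1_orth_proj)
    then show "P \<in> op_span (Proj k)" using orth_proj_singleton_in_op_span_Proj k by simp
  qed
  then show "Fsa \<subseteq> op_span (Proj k)"
    using Fsa_in_op_span_Proj1 op_span_minimal by blast
qed

section \<open>Surjectivity\<close>

locale proj_preserving =
  fixes L :: "op \<Rightarrow> op" and k :: nat
  assumes linear: "\<forall>S\<in>Fsa. \<forall>T\<in>Fsa. \<forall>a b::real.
      L (op_add (op_scale a S) (op_scale b T)) = op_add (op_scale a (L S)) (op_scale b (L T))"
    and k_pos: "k \<ge> 1"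
    and proj: "L ` Proj k = Proj k"
begin

lemma L_op_lincomb: "S \<in> Fsa \<Longrightarrow> T \<in> Fsa \<Longrightarrow> L (op_lincomb a S b T) = op_lincomb a (L S) b (L T)"
  using linear by (simp add: op_lincomb_def)

lemma L_zero: "L 0 = 0"
proof -
  have e: "op_lincomb 0 0 0 0 = (0::op)" by (simp add: op_lincomb_fun fun_eq_iff)
  have "L (op_lincomb 0 0 0 0) = op_lincomb 0 (L 0) 0 (L 0)"
    using L_op_lincomb zero_Fsa by blast
  then show ?thesis unfolding e by (simp add: op_lincomb_fun fun_eq_iff zero_fun_def)
qed

lemma L_add: "A \<in> Fsa \<Longrightarrow> B \<in> Fsa \<Longrightarrow> L (A + B) = L A + L B"
  using L_op_lincomb[of A B 1 1] by (simp add: op_lincomb_fun fun_eq_iff plus_fun_def)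

lemma L_op_span:
  assumes "S \<subseteq> Fsa"
  shows "X \<in> op_span S \<Longrightarrow> L X \<in> op_span (L ` S)"
proof (induction rule: op_span.induct)
  case zero
  show ?case unfolding L_zero by (rule op_span.zero)
next
  case (step Q T a)
  have "T \<in> Fsa" using op_span_subset_Fsa[OF assms step(2)] .
  then have "L (op_lincomb a Q 1 T) = op_lincomb a (L Q) 1 (L T)"
    using assms step(1) by (intro L_op_lincomb) auto
  then show ?case using step by (simp add: op_span.step)
qed

lemma op_span_L_image:
  assumes "S \<subseteq> Fsa"
  shows "Y \<in> op_span (L ` S) \<Longrightarrow> \<exists>X\<in>op_span S. L X = Y"
proof (induction rule: op_span.induct)
  case zero
  then show ?case using L_zero op_span.zero by blast
next
  case (step Q T a)
  obtain Q' where Q': "Q' \<in> S" "Q = L Q'" using step(1) by auto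
  obtain X where X: "X \<in> op_span S" "L X = T" using step(3) by auto
  have "X \<in> Fsa" using op_span_subset_Fsa[OF assms X(1)] .
  then have "L (op_lincomb a Q' 1 X) = op_lincomb a Q 1 T"
    using assms Q' X by (subst L_op_lincomb) auto
  moreover have "op_lincomb a Q' 1 X \<in> op_span S" using Q' X by (intro op_span.step)
  ultimately show ?case by blast
qed

lemma L_image_Fsa: "L ` Fsa = Fsa"
proof -
  have span: "Fsa = op_span (Proj k)" using Fsa_eq_op_span_Proj[OF k_pos] .
  show ?thesis
  proof
    show "L ` Fsa \<subseteq> Fsa"
      using L_op_span[OF Proj_subset_Fsa[of k]] unfolding span proj by blast
    show "Fsa \<subseteq> L ` Fsa"
      using op_span_L_image[OF Proj_subset_Fsa[of k]] unfolding span proj by blast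
  qed
qed

lemma L_Fsa: "T \<in> Fsa \<Longrightarrow> L T \<in> Fsa"
  using L_image_Fsa by auto

end

section \<open>Transition probabilities\<close>

lemma cmod_power2_eq_Re: "(cmod c)\<^sup>2 = Re (c * cnj c)"
  by (simp add: complex_mult_cnj cmod_power2)

lemma unit_vec_eq_if_cmod_l2inner_1:
  assumes r: "unit_vec r" and s: "unit_vec s" and eq: "(cmod (l2inner s r))\<^sup>2 = 1"
  shows "s = cscale (l2inner s r) r"
proof -
  have sl: "s \<in> l2" using s by (simp add: unit_vec_def)
  have "l2norm2 (s - orth_proj {r} s) = 0"
    using l2norm2_orth_proj_residual[OF orthonormal_singleton[OF r] _ sl] eq
      l2norm2_unit_vec[OF s] by simp
  then show ?thesis
    using l2norm2_eq_0D[of "s - orth_proj {r} s"] sl r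
    by (simp add: orth_proj_singleton unit_vec_def)
qed

lemma unit_vec_orthonormal_split:
  assumes E: "orthonormal E" "finite E" and y: "unit_vec y" and ne: "y \<noteq> orth_proj E y"
  obtains z where "unit_vec z" "\<And>e. e \<in> E \<Longrightarrow> l2inner z e = 0"
    "y = orth_proj E y
      + cscale (complex_of_real (sqrt (1 - (\<Sum>e\<in>E. (cmod (l2inner y e))\<^sup>2)))) z"
proof -
  have yl: "y \<in> l2" using y by (simp add: unit_vec_def)
  have El2: "E \<subseteq> l2" using E by (simp add: orthonormal_def)
  define w where "w = y - orth_proj E y"
  have wl: "w \<in> l2" unfolding w_def using yl orth_proj_l2[OF El2] by simp
  have "w \<noteq> 0" using ne unfolding w_def by simp
  then obtain z where z: "unit_vec z" and n: "l2norm w > 0"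
    and wz: "w = cscale (complex_of_real (l2norm w)) z"
    using unit_vec_normalize wl by blast
  have "l2norm w = sqrt (1 - (\<Sum>e\<in>E. (cmod (l2inner y e))\<^sup>2))"
    using l2norm2_orth_proj_residual[OF E yl] l2norm2_unit_vec[OF y]
    by (simp add: l2norm_eq_sqrt w_def)
  moreover have "l2inner z e = 0" if e: "e \<in> E" for e
  proof -
    have "l2inner w e = complex_of_real (l2norm w) * l2inner z e"
      using z El2 e by (subst wz) (simp add: l2inner_cscale_left unit_vec_def subset_iff)
    then show ?thesis
      using l2inner_orth_proj_residual[OF E yl e] n by (simp add: w_def)
  qed
  moreover have "y = orth_proj E y + w" unfolding w_def by simp
  ultimately show ?thesis using that z wz by metis
qed

lemma orth_proj_eq_if_cmod_l2inner_1:
  assumes r: "unit_vec r" and s: "unit_vec s" and eq: "(cmod (l2inner r s))\<^sup>2 = 1"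
  shows "orth_proj {s} = orth_proj {r}"
proof
  fix y
  have rl: "r \<in> l2" and sl: "s \<in> l2" using r s by (auto simp: unit_vec_def)
  define c where "c = l2inner s r"
  have "(cmod c)\<^sup>2 = 1" using eq l2inner_commute[OF rl sl] by (simp add: c_def)
  then have s_eq: "s = cscale c r" and cc: "c * cnj c = 1"
    using unit_vec_eq_if_cmod_l2inner_1[OF r s] unfolding c_def
    by (simp_all add: complex_mult_cnj cmod_power2 complex_eq_iff)
  show "orth_proj {s} y = orth_proj {r} y"
  proof (cases "y \<in> l2")
    case True
    have "orth_proj {s} y = cscale (l2inner y (cscale c r)) (cscale c r)"
      using True s_eq by (simp add: orth_proj_singleton)
    also have "\<dots> = cscale (c * cnj c * l2inner y r) r"
      using l2inner_cscale_right[OF rl True, of c]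
      by (simp add: cscale_def fun_eq_iff algebra_simps)
    finally show ?thesis using True cc by (simp add: orth_proj_singleton)
  qed (simp add: orth_proj_outside)
qed

definition quad_form :: "op \<Rightarrow> vec \<Rightarrow> real" where
  "quad_form A r = Re (l2inner (A r) r)"

lemma quad_form_orth_proj_singleton:
  assumes r: "r \<in> l2" and s: "s \<in> l2"
  shows "quad_form (orth_proj {s}) r = (cmod (l2inner r s))\<^sup>2"
proof -
  have "l2inner (orth_proj {s} r) r = l2inner r s * cnj (l2inner r s)"
    using r s l2inner_commute[OF r s] by (simp add: orth_proj_singleton l2inner_cscale_left)
  then show ?thesis unfolding quad_form_def by (simp add: cmod_power2_eq_Re)
qed

lemma quad_form_op_lincomb:
  "bounded_op A \<Longrightarrow> bounded_op B \<Longrightarrow> r \<in> l2 \<Longrightarrow>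
    quad_form (op_lincomb a A b B) r = a * quad_form A r + b * quad_form B r"
  unfolding quad_form_def op_lincomb_apply
  by (simp add: l2inner_add_left l2inner_cscale_left bounded_op_l2)

lemma quad_form_eq_if_orth_proj_eq:
  assumes r: "unit_vec r" and s: "unit_vec s" and eq: "orth_proj {r} = orth_proj {s}"
    and A: "bounded_op A"
  shows "quad_form A r = quad_form A s"
proof -
  have rl: "r \<in> l2" and sl: "s \<in> l2" using r s by (auto simp: unit_vec_def)
  have "(cmod (l2inner s r))\<^sup>2 = quad_form (orth_proj {s}) s"
    using quad_form_orth_proj_singleton[OF sl rl] eq by simp
  also have "\<dots> = 1" using quad_form_orth_proj_singleton[OF sl sl] s by (simp add: unit_vec_def)
  finally have e: "(cmod (l2inner s r))\<^sup>2 = 1" .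
  define c where "c = l2inner s r"
  have s_eq: "s = cscale c r" and cc: "c * cnj c = 1"
    using unit_vec_eq_if_cmod_l2inner_1[OF r s e] e unfolding c_def
    by (simp_all add: complex_mult_cnj cmod_power2 complex_eq_iff)
  have "l2inner (A s) s = c * cnj c * l2inner (A r) r"
    unfolding s_eq using rl A
    by (simp add: bounded_op_cscale l2inner_cscale_left l2inner_cscale_right bounded_op_l2)
  then show ?thesis unfolding quad_form_def using cc by simp
qed

lemma selfadjoint_op_eq_0I:
  assumes sa: "selfadjoint_op X" and q0: "\<And>x. unit_vec x \<Longrightarrow> quad_form X x = 0"
  shows "X = 0"
proof -
  have bX: "bounded_op X" using sa by (simp add: selfadjoint_op_def)
  have q: "Re (l2inner (X x) x) = 0" if x: "x \<in> l2" for x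
  proof (cases "x = 0")
    case True
    then show ?thesis using bounded_op_zero[OF bX] by simp
  next
    case False
    then obtain u n where u: "unit_vec u" and xu: "x = cscale (complex_of_real n) u"
      using unit_vec_normalize x by metis
    have "l2inner (X x) x = complex_of_real n * complex_of_real n * l2inner (X u) u"
      unfolding xu using u bX
      by (simp add: bounded_op_cscale l2inner_cscale_left l2inner_cscale_right bounded_op_l2
          unit_vec_def)
    then show ?thesis using q0[OF u] by (simp add: quad_form_def)
  qed
  have "X x = 0" if x: "x \<in> l2" for x
  proof -
    define y where "y = X x"
    have y: "y \<in> l2" and Xx: "X x \<in> l2" and Xy: "X y \<in> l2"
      unfolding y_def using bounded_op_l2[OF bX] x by auto
    have "l2inner (X (x + y)) (x + y)
        = l2inner (X x) x + l2inner (X y) y + (l2inner (X x) y + l2inner (X y) x)"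
      using x y Xx Xy
      by (simp add: bounded_op_add[OF bX] l2inner_add_left l2inner_add_right algebra_simps)
    moreover have "l2inner (X y) x = cnj (l2inner (X x) y)"
      using sa x y l2inner_commute[OF Xx y] by (simp add: selfadjoint_op_def)
    ultimately have "Re (l2inner (X x) y) = 0"
      using q[of "x + y"] q[OF x] q[OF y] x y by simp
    then have "l2norm2 y = 0" using l2inner_self[OF y] unfolding y_def by simp
    then show ?thesis using l2norm2_eq_0D[OF y] unfolding y_def by simp
  qed
  then show ?thesis
    using bounded_op_outside[OF bX] by (auto simp: fun_eq_iff)
qed

lemma l2inner_orthonormal_pair:
  assumes r: "unit_vec r" and f: "unit_vec f" and rf: "l2inner r f = 0"
  shows "l2inner (cscale a r + cscale b f) (cscale c r + cscale d f) = a * cnj c + b * cnj d"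
proof -
  have rl: "r \<in> l2" and fl: "f \<in> l2" using r f by (auto simp: unit_vec_def)
  have fr: "l2inner f r = 0" using l2inner_commute[OF rl fl] rf by simp
  show ?thesis using rl fl r f rf fr
    by (simp add: l2inner_add_left l2inner_add_right l2inner_cscale_left l2inner_cscale_right
        unit_vec_def algebra_simps)
qed

lemma unit_vec_orthogonal_combination:
  assumes u: "unit_vec u" and v: "unit_vec v" and uv: "l2inner u v = 0"
    and ab: "(cmod \<alpha>)\<^sup>2 + (cmod \<beta>)\<^sup>2 = 1"
  shows "unit_vec (cscale \<alpha> u + cscale \<beta> v)"
proof -
  have "\<alpha> * cnj \<alpha> + \<beta> * cnj \<beta> = 1"
    using ab by (simp add: complex_mult_cnj cmod_power2 complex_eq_iff)
  then show ?thesis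
    using l2inner_orthonormal_pair[OF u v uv, of \<alpha> \<beta> \<alpha> \<beta>] u v by (simp add: unit_vec_def)
qed

lemma orth_proj_orthogonal_combination:
  assumes u: "u \<in> l2" and v: "v \<in> l2"
  shows "orth_proj {cscale \<alpha> u + cscale \<beta> v} = op_lincomb ((cmod \<alpha>)\<^sup>2) (orth_proj {u}) 1
    (op_lincomb ((cmod \<beta>)\<^sup>2) (orth_proj {v}) 1 (herm_pair u v (\<alpha> * cnj \<beta>)))" (is "_ = ?D")
proof
  fix y
  show "orth_proj {cscale \<alpha> u + cscale \<beta> v} y = ?D y"
  proof (cases "y \<in> l2")
    case True
    have e: "l2inner y (cscale \<alpha> u + cscale \<beta> v) = cnj \<alpha> * l2inner y u + cnj \<beta> * l2inner y v"
      using u v True by (simp add: l2inner_add_right l2inner_cscale_right)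
    have a: "complex_of_real ((cmod \<alpha>)\<^sup>2) = \<alpha> * cnj \<alpha>"
      and b: "complex_of_real ((cmod \<beta>)\<^sup>2) = \<beta> * cnj \<beta>"
      by (rule complex_norm_square)+
    have "?D y = cscale (\<alpha> * cnj \<alpha>) (cscale (l2inner y u) u)
        + cscale 1 (cscale (\<beta> * cnj \<beta>) (cscale (l2inner y v) v)
        + cscale 1 (cscale (\<alpha> * cnj \<beta> * l2inner y v) u + cscale (cnj (\<alpha> * cnj \<beta>) * l2inner y u) v))"
      unfolding op_lincomb_apply orth_proj_singleton[OF True] a b herm_pair_def using True by simp
    also have "\<dots> = orth_proj {cscale \<alpha> u + cscale \<beta> v} y"
      unfolding orth_proj_singleton[OF True] e by (simp add: cscale_def fun_eq_iff algebra_simps)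
    finally show ?thesis by simp
  qed (simp add: herm_pair_def op_lincomb_fun orth_proj_outside fun_eq_iff)
qed

lemma nonpos_if_bounded_on_circle:
  assumes h: "\<And>\<alpha> b::real. \<alpha>\<^sup>2 + b\<^sup>2 = 1 \<Longrightarrow> \<alpha> * b * a \<le> b\<^sup>2"
  shows "a \<le> 0"
proof (rule ccontr)
  assume "\<not> a \<le> 0"
  then have a: "a > 0" by simp
  define t where "t = min (a/4) (1/2)"
  have t: "t > 0" "t \<le> 1/2" "t \<le> a/4" using a by (auto simp: t_def)
  then have "t\<^sup>2 \<le> (1/2)\<^sup>2" by (intro power_mono) auto
  then have "1/4 \<le> 1 - t\<^sup>2" by (simp add: power2_eq_square)
  define \<alpha> where "\<alpha> = sqrt (1 - t\<^sup>2)"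
  have "sqrt (1/4) \<le> \<alpha>" unfolding \<alpha>_def using \<open>1/4 \<le> 1 - t\<^sup>2\<close> by (rule real_sqrt_le_mono)
  then have \<alpha>: "1/2 \<le> \<alpha>" by (simp add: real_sqrt_divide)
  have "\<alpha>\<^sup>2 + t\<^sup>2 = 1" unfolding \<alpha>_def using \<open>1/4 \<le> 1 - t\<^sup>2\<close> by simp
  then have "\<alpha> * t * a \<le> t\<^sup>2" by (rule h)
  then have "t * (\<alpha> * a) \<le> t * t" by (simp add: power2_eq_square mult_ac)
  then have "\<alpha> * a \<le> t" using t(1) by simp
  moreover have "a / 2 \<le> \<alpha> * a" using \<alpha> a by simp
  ultimately show False using t a by linarith
qed

lemma zero_if_cross_term_bounded:
  assumes k: "0 \<le> \<kappa>" and h: "\<And>p b::real. p\<^sup>2 + b\<^sup>2 = 1 \<Longrightarrow> p\<^sup>2 + b\<^sup>2 * \<kappa> + p * b * a \<le> 1"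
  shows "a = 0"
proof -
  have le: "p * b * a \<le> b\<^sup>2" if "p\<^sup>2 + b\<^sup>2 = 1" for p b
  proof -
    have "p * b * a \<le> b\<^sup>2 * (1 - \<kappa>)" using h[OF that] that by (simp add: algebra_simps)
    also have "\<dots> \<le> b\<^sup>2" using k by (simp add: mult_left_le)
    finally show ?thesis .
  qed
  have "a \<le> 0" by (rule nonpos_if_bounded_on_circle[OF le])
  moreover have "- a \<le> 0"
  proof (rule nonpos_if_bounded_on_circle)
    fix p b :: real assume "p\<^sup>2 + b\<^sup>2 = 1"
    then show "p * b * - a \<le> b\<^sup>2" using le[of p "- b"] by simp
  qed
  ultimately show ?thesis by simp
qed

lemma orthonormal_pair:
  assumes "unit_vec r" "unit_vec f" "l2inner r f = 0"
  shows "orthonormal {r, f}" "r \<noteq> f"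
  using assms l2inner_commute[of r f] by (auto simp: orthonormal_def unit_vec_def)

lemma orth_proj_pair:
  "r \<noteq> f \<Longrightarrow> y \<in> l2 \<Longrightarrow> orth_proj {r, f} y = cscale (l2inner y r) r + cscale (l2inner y f) f"
  by (simp add: orth_proj_apply)

definition inv_sqrt2 :: complex where "inv_sqrt2 = complex_of_real (1 / sqrt 2)"

lemma inv_sqrt2_square: "inv_sqrt2 * inv_sqrt2 = 1/2"
  unfolding inv_sqrt2_def by (simp flip: of_real_mult)

lemma cnj_inv_sqrt2: "cnj inv_sqrt2 = inv_sqrt2" unfolding inv_sqrt2_def by simp

lemma cmod_inv_sqrt2: "(cmod inv_sqrt2)\<^sup>2 = 1/2"
  unfolding inv_sqrt2_def norm_of_real by (simp add: power_divide)

definition diag :: "vec \<Rightarrow> vec \<Rightarrow> complex \<Rightarrow> vec" where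
  "diag u v \<omega> = cscale inv_sqrt2 u + cscale (inv_sqrt2 * \<omega>) v"

lemma cmod_diag_coeffs: "cmod \<omega> = 1 \<Longrightarrow> (cmod inv_sqrt2)\<^sup>2 + (cmod (inv_sqrt2 * \<omega>))\<^sup>2 = 1"
  by (simp add: norm_mult power_mult_distrib cmod_inv_sqrt2)

lemma unit_vec_diag:
  "unit_vec u \<Longrightarrow> unit_vec v \<Longrightarrow> l2inner u v = 0 \<Longrightarrow> cmod \<omega> = 1 \<Longrightarrow> unit_vec (diag u v \<omega>)"
  unfolding diag_def by (rule unit_vec_orthogonal_combination) (simp_all add: cmod_diag_coeffs)

lemma orth_proj_diag_pair:
  assumes u: "u \<in> l2" and v: "v \<in> l2" and w: "cmod \<omega> = 1"
  shows "orth_proj {diag u v \<omega>} + orth_proj {diag u v (- \<omega>)} = orth_proj {u} + orth_proj {v}"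
proof
  fix y
  show "(orth_proj {diag u v \<omega>} + orth_proj {diag u v (- \<omega>)}) y = (orth_proj {u} + orth_proj {v}) y"
  proof (cases "y \<in> l2")
    case True
    have e1: "l2inner y (diag u v \<omega>) = inv_sqrt2 * l2inner y u + inv_sqrt2 * cnj \<omega> * l2inner y v"
      and e2: "l2inner y (diag u v (- \<omega>))
        = inv_sqrt2 * l2inner y u - inv_sqrt2 * cnj \<omega> * l2inner y v"
      using u v True
      by (simp_all add: diag_def l2inner_add_right l2inner_diff_right l2inner_cscale_right
          cnj_inv_sqrt2)
    have "(orth_proj {diag u v \<omega>} + orth_proj {diag u v (- \<omega>)}) y =
        cscale (inv_sqrt2 * l2inner y u + inv_sqrt2 * cnj \<omega> * l2inner y v) (diag u v \<omega>)
        + cscale (inv_sqrt2 * l2inner y u - inv_sqrt2 * cnj \<omega> * l2inner y v) (diag u v (- \<omega>))"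
      unfolding plus_fun_apply orth_proj_singleton[OF True] e1 e2 ..
    also have "\<dots> = cscale (2 * (inv_sqrt2 * inv_sqrt2)) (cscale (l2inner y u) u)
        + cscale (2 * (inv_sqrt2 * inv_sqrt2) * (\<omega> * cnj \<omega>)) (cscale (l2inner y v) v)"
      by (simp add: diag_def cscale_def fun_eq_iff algebra_simps)
    also have "\<omega> * cnj \<omega> = 1"
      using w complex_norm_square[of \<omega>] by simp
    finally show ?thesis
      using True by (simp add: inv_sqrt2_square orth_proj_singleton cscale_def fun_eq_iff)
  qed (simp add: orth_proj_outside)
qed

lemma l2inner_eq_0_if_orth_proj_sum_eq:
  assumes t: "unit_vec t" and t': "unit_vec t'" and w: "w \<in> l2" "r \<in> l2" "s \<in> l2"
    and wr: "l2inner w r = 0" and ws: "l2inner w s = 0"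
    and eq: "orth_proj {t} + orth_proj {t'} = orth_proj {r} + orth_proj {s}"
  shows "l2inner w t = 0"
proof -
  have tl: "t \<in> l2" and t'l: "t' \<in> l2" using t t' by (auto simp: unit_vec_def)
  have "(orth_proj {t} + orth_proj {t'}) w = (orth_proj {r} + orth_proj {s}) w"
    using eq by simp
  then have "cscale (l2inner w t) t + cscale (l2inner w t') t' = 0"
    using w wr ws by (simp add: orth_proj_singleton cscale_def fun_eq_iff)
  then have "l2inner (cscale (l2inner w t) t + cscale (l2inner w t') t') w = 0"
    by simp
  then have "l2inner w t * cnj (l2inner w t) + l2inner w t' * cnj (l2inner w t') = 0"
    using tl t'l w l2inner_commute[OF w(1) tl] l2inner_commute[OF w(1) t'l]
    by (simp add: l2inner_add_left l2inner_cscale_left)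
  then have "Re (l2inner w t * cnj (l2inner w t)) + Re (l2inner w t' * cnj (l2inner w t')) = 0"
    by (metis plus_complex.sel(1) zero_complex.sel(1))
  then have "(cmod (l2inner w t))\<^sup>2 + (cmod (l2inner w t'))\<^sup>2 = 0"
    by (simp add: cmod_power2_eq_Re)
  then show ?thesis by (simp add: add_nonneg_eq_0_iff)
qed

lemma in_span_if_orth_proj_sum_eq:
  assumes r: "unit_vec r" and f: "unit_vec f" and rf: "l2inner r f = 0"
    and t: "unit_vec t" and t': "unit_vec t'"
    and s: "s = cscale \<sigma> r + cscale \<tau> f"
    and eq: "orth_proj {t} + orth_proj {t'} = orth_proj {r} + orth_proj {s}"
  shows "t = cscale (l2inner t r) r + cscale (l2inner t f) f"
proof -
  have rl: "r \<in> l2" and fl: "f \<in> l2" and tl: "t \<in> l2"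
    using r f t by (auto simp: unit_vec_def)
  note E = orthonormal_pair[OF r f rf]
  define p where "p = orth_proj {r, f} t"
  define w where "w = t - p"
  have pl: "p \<in> l2" unfolding p_def using rl fl by (simp add: orth_proj_l2)
  have wl: "w \<in> l2" unfolding w_def using tl pl by simp
  have wr: "l2inner w r = 0" and wf: "l2inner w f = 0"
    unfolding w_def p_def using l2inner_orth_proj_residual[OF E(1) _ tl] by auto
  have ws: "l2inner w s = 0"
    unfolding s using rl fl wl wr wf by (simp add: l2inner_add_right l2inner_cscale_right)
  have wt: "l2inner w t = 0"
    using l2inner_eq_0_if_orth_proj_sum_eq[OF t t' wl rl _ wr ws eq] rl fl s by simp
  have "l2inner w w = l2inner w (t - p)" unfolding w_def[symmetric] ..
  also have "\<dots> = l2inner w t - l2inner w p" by (rule l2inner_diff_right[OF tl pl wl])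
  also have "\<dots> = 0"
    unfolding p_def using wt wr wf wl rl fl tl
    by (simp add: orth_proj_pair[OF E(2)] l2inner_add_right l2inner_cscale_right)
  finally have "w = 0" using l2inner_self_eq_0D[OF wl] by simp
  then show ?thesis using tl unfolding w_def p_def by (simp add: orth_proj_pair[OF E(2)])
qed

lemma cmod_add_power2: "(cmod (a + b))\<^sup>2 = (cmod a)\<^sup>2 + (cmod b)\<^sup>2 + 2 * Re (a * cnj b)"
  unfolding cmod_power2 by (simp add: power2_eq_square algebra_simps)

lemma cmod_mult_power2: "(cmod (a * b))\<^sup>2 = (cmod a)\<^sup>2 * (cmod b)\<^sup>2"
  by (simp add: norm_mult power_mult_distrib)

lemma eq_square_if_Re_mult_cnj:
  assumes "Re Z = m" "Re Q = m" "(cmod Z)\<^sup>2 = \<rho>" "(cmod Q)\<^sup>2 = \<rho>" "Re (Z * cnj Q) = m\<^sup>2"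
  shows "\<rho> = m\<^sup>2"
proof -
  have "Re Z * Re Q + Im Z * Im Q = m\<^sup>2" using assms(5) by simp
  then have "Im Z * Im Q = 0" using assms(1,2) by (simp add: power2_eq_square)
  then have "(Im Z)\<^sup>2 * (Im Q)\<^sup>2 = 0"
    by (simp add: power_mult_distrib[symmetric])
  moreover have "(Im Z)\<^sup>2 = (Im Q)\<^sup>2" using assms(1-4) by (simp add: cmod_power2)
  ultimately have "(Im Z)\<^sup>2 = 0" by (metis mult_eq_0_iff)
  then show ?thesis using assms(1,3) by (simp add: cmod_power2)
qed

text \<open>Coordinate form of no_transition_configuration_in_plane below: t1, t2 and q1, q2 are the
  coordinates of unit vectors t, q in an orthonormal basis r, f, and s = \<sigma> r + \<tau> f.\<close>

lemma transition_configuration_impossible: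
  fixes t1 t2 q1 q2 \<sigma> :: complex and \<kappa> \<tau> :: real
  assumes k: "0 < \<kappa>" "\<kappa> < 1" and tau: "\<tau>\<^sup>2 = 1 - \<kappa>" and sig: "(cmod \<sigma>)\<^sup>2 = \<kappa>"
    and tn: "(cmod t1)\<^sup>2 + (cmod t2)\<^sup>2 = 1" and qn: "(cmod q1)\<^sup>2 + (cmod q2)\<^sup>2 = 1"
    and t1: "(cmod t1)\<^sup>2 = (1 + \<kappa>) / 2" and q1: "(cmod q1)\<^sup>2 = (1 + \<kappa>) / 2"
    and ts: "(cmod (t1 * cnj \<sigma> + t2 * complex_of_real \<tau>))\<^sup>2 = (1 + \<kappa>) / 2"
    and qs: "(cmod (q1 * cnj \<sigma> + q2 * complex_of_real \<tau>))\<^sup>2 = (1 + \<kappa>) / 2"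
    and tq: "(cmod (t1 * cnj q1 + t2 * cnj q2))\<^sup>2 = (1 + \<kappa>) / 2"
  shows False
proof -
  define z where "z = t1 * cnj t2"
  define zq where "zq = q1 * cnj q2"
  define w where "w = cnj \<sigma> * complex_of_real \<tau>"
  define m where "m = \<kappa> * (1 - \<kappa>) / 2"
  define \<rho> where "\<rho> = (1 + \<kappa>) / 2 * ((1 - \<kappa>) / 2) * (\<kappa> * (1 - \<kappa>))"
  have t2: "(cmod t2)\<^sup>2 = (1 - \<kappa>) / 2" using tn t1 by (simp add: field_simps)
  have q2: "(cmod q2)\<^sup>2 = (1 - \<kappa>) / 2" using qn q1 by (simp add: field_simps)
  have wn: "(cmod w)\<^sup>2 = \<kappa> * (1 - \<kappa>)" unfolding w_def cmod_mult_power2 using sig tau by simp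
  have "(cmod (t1 * cnj \<sigma> + t2 * complex_of_real \<tau>))\<^sup>2
        = (cmod t1)\<^sup>2 * \<kappa> + (cmod t2)\<^sup>2 * (1 - \<kappa>) + 2 * Re (z * w)"
    unfolding cmod_add_power2 cmod_mult_power2 using sig tau by (simp add: z_def w_def mult_ac)
  then have Re_Z: "Re (z * w) = m" using ts t1 t2 unfolding m_def by (simp add: field_simps)
  have "(cmod (q1 * cnj \<sigma> + q2 * complex_of_real \<tau>))\<^sup>2
        = (cmod q1)\<^sup>2 * \<kappa> + (cmod q2)\<^sup>2 * (1 - \<kappa>) + 2 * Re (zq * w)"
    unfolding cmod_add_power2 cmod_mult_power2 using sig tau by (simp add: zq_def w_def mult_ac)
  then have Re_Q: "Re (zq * w) = m" using qs q1 q2 unfolding m_def by (simp add: field_simps)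
  have "(cmod (t1 * cnj q1 + t2 * cnj q2))\<^sup>2
        = (cmod t1)\<^sup>2 * (cmod q1)\<^sup>2 + (cmod t2)\<^sup>2 * (cmod q2)\<^sup>2 + 2 * Re (z * cnj zq)"
    unfolding cmod_add_power2 cmod_mult_power2 by (simp add: z_def zq_def mult_ac)
  then have Re_zq: "Re (z * cnj zq) = \<kappa> * (1 - \<kappa>) / 4" using tq t1 t2 q1 q2
    by (simp add: field_simps)
  have ZQ: "z * w * cnj (zq * w) = z * cnj zq * complex_of_real ((cmod w)\<^sup>2)"
    unfolding complex_norm_square by (simp add: mult_ac)
  have "Re (z * w * cnj (zq * w)) = Re (z * cnj zq) * (cmod w)\<^sup>2" unfolding ZQ by simp
  also have "\<dots> = m\<^sup>2" unfolding Re_zq wn m_def by (simp add: power2_eq_square)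
  finally have "Re (z * w * cnj (zq * w)) = m\<^sup>2" .
  moreover have "(cmod (z * w))\<^sup>2 = \<rho>" and "(cmod (zq * w))\<^sup>2 = \<rho>"
    unfolding z_def zq_def cmod_mult_power2 complex_mod_cnj t1 t2 q1 q2 wn \<rho>_def by simp_all
  ultimately have "\<rho> = m\<^sup>2"
    using eq_square_if_Re_mult_cnj Re_Z Re_Q by blast
  moreover have "\<rho> - m\<^sup>2 = \<kappa> * (1 - \<kappa>)\<^sup>2 / 4"
    unfolding \<rho>_def m_def by (simp add: power2_eq_square field_simps)
  ultimately show False using k by simp
qed

lemma unit_vec_second_basis_vec:
  assumes r: "unit_vec r" and s: "unit_vec s" and k: "(cmod (l2inner s r))\<^sup>2 < 1"
  obtains f where "unit_vec f" "l2inner r f = 0"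
    "s = cscale (l2inner s r) r + cscale (complex_of_real (sqrt (1 - (cmod (l2inner s r))\<^sup>2))) f"
proof -
  have rl: "r \<in> l2" and sl: "s \<in> l2" using r s by (auto simp: unit_vec_def)
  have "s \<noteq> orth_proj {r} s"
  proof
    assume "s = orth_proj {r} s"
    then have "l2norm2 s = (cmod (l2inner s r))\<^sup>2"
      using l2norm2_orth_proj_residual[OF orthonormal_singleton[OF r] _ sl]
      by (simp add: l2norm2_def)
    then show False using k l2norm2_unit_vec[OF s] by simp
  qed
  then obtain f where f: "unit_vec f" "l2inner f r = 0"
    and "s = orth_proj {r} s + cscale (complex_of_real (sqrt (1 - (cmod (l2inner s r))\<^sup>2))) f"
    using unit_vec_orthonormal_split[OF orthonormal_singleton[OF r] _ s] by auto
  moreover have "l2inner r f = 0"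
    using f l2inner_commute[of f r] rl by (simp add: unit_vec_def)
  ultimately show ?thesis
    using that sl by (simp add: orth_proj_singleton)
qed

lemma cmod_coords_orthonormal_pair:
  assumes r: "unit_vec r" and f: "unit_vec f" and rf: "l2inner r f = 0"
    and t: "unit_vec t" and t_eq: "t = cscale a r + cscale b f"
  shows "(cmod a)\<^sup>2 + (cmod b)\<^sup>2 = 1"
proof -
  have "a * cnj a + b * cnj b = 1"
    using l2inner_orthonormal_pair[OF r f rf, of a b a b] t t_eq by (simp add: unit_vec_def)
  then have "Re (a * cnj a) + Re (b * cnj b) = 1"
    by (metis one_complex.sel(1) plus_complex.sel(1))
  then show ?thesis by (simp add: cmod_power2_eq_Re)
qed

lemma no_transition_configuration_in_plane:
  assumes r: "unit_vec r" and f: "unit_vec f" and rf: "l2inner r f = 0"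
    and k: "0 < \<kappa>" "\<kappa> < 1" and sig: "(cmod \<sigma>)\<^sup>2 = \<kappa>"
    and s_eq: "s = cscale \<sigma> r + cscale (complex_of_real (sqrt (1 - \<kappa>))) f"
    and t: "unit_vec t" "t = cscale t1 r + cscale t2 f"
    and q: "unit_vec q" "q = cscale q1 r + cscale q2 f"
    and tp_t: "(cmod (l2inner r t))\<^sup>2 = (1 + \<kappa>) / 2" "(cmod (l2inner s t))\<^sup>2 = (1 + \<kappa>) / 2"
    and tp_q: "(cmod (l2inner r q))\<^sup>2 = (1 + \<kappa>) / 2" "(cmod (l2inner s q))\<^sup>2 = (1 + \<kappa>) / 2"
    and tp_tq: "(cmod (l2inner t q))\<^sup>2 = (1 + \<kappa>) / 2"
  shows False
proof -
  define \<tau> where "\<tau> = sqrt (1 - \<kappa>)"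
  have tau: "\<tau>\<^sup>2 = 1 - \<kappa>" using k by (simp add: \<tau>_def)
  have rl: "r \<in> l2" and fl: "f \<in> l2" using r f by (auto simp: unit_vec_def)
  have coord: "l2inner r (cscale a r + cscale b f) = cnj a" for a b
    using l2inner_commute[OF rl, of "cscale a r + cscale b f"] l2inner_commute[OF rl fl] rf r rl fl
    by (simp add: l2inner_add_left l2inner_cscale_left unit_vec_def)
      (metis complex_cnj_cnj)
  have "l2inner r t = cnj t1" "l2inner r q = cnj q1"
    unfolding t(2) q(2) coord by simp_all
  moreover have "l2inner s t = \<sigma> * cnj t1 + complex_of_real \<tau> * cnj t2"
    and "l2inner s q = \<sigma> * cnj q1 + complex_of_real \<tau> * cnj q2"
    and "l2inner t q = t1 * cnj q1 + t2 * cnj q2"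
    unfolding s_eq t(2) q(2) \<tau>_def by (simp_all add: l2inner_orthonormal_pair[OF r f rf])
  moreover have
    "cmod (\<sigma> * cnj x + complex_of_real \<tau> * cnj y) = cmod (x * cnj \<sigma> + y * complex_of_real \<tau>)"
    for x y
    by (metis complex_cnj_add complex_cnj_cnj complex_cnj_mult complex_cnj_complex_of_real
        complex_mod_cnj mult.commute)
  ultimately show False
    using transition_configuration_impossible[OF k tau sig, of t1 t2 q1 q2]
      cmod_coords_orthonormal_pair[OF r f rf t] cmod_coords_orthonormal_pair[OF r f rf q]
      tp_t tp_q tp_tq by simp
qed

section \<open>Injectivity for rank-one projections\<close>

locale rank_one_preserving = proj_preserving L 1 for L
begin

definition phi :: "vec \<Rightarrow> vec" where
  "phi x = (SOME r. unit_vec r \<and> L (orth_proj {x}) = orth_proj {r})"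

lemma phi_spec:
  assumes "unit_vec x"
  shows "unit_vec (phi x) \<and> L (orth_proj {x}) = orth_proj {phi x}"
proof -
  have "L (orth_proj {x}) \<in> Proj 1"
    using orth_proj_in_Proj1[OF assms] proj by auto
  then obtain r where "unit_vec r" "L (orth_proj {x}) = orth_proj {r}"
    by (rule Proj1_orth_proj)
  then have "\<exists>r. unit_vec r \<and> L (orth_proj {x}) = orth_proj {r}" by blast
  then show ?thesis unfolding phi_def by (rule someI_ex)
qed

lemma unit_vec_phi: "unit_vec x \<Longrightarrow> unit_vec (phi x)"
  using phi_spec by blast

lemma L_orth_proj: "unit_vec x \<Longrightarrow> L (orth_proj {x}) = orth_proj {phi x}"
  using phi_spec by blast

lemma phi_l2: "unit_vec x \<Longrightarrow> phi x \<in> l2"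
  using unit_vec_phi by (simp add: unit_vec_def)

lemma bounded_op_L: "T \<in> Fsa \<Longrightarrow> bounded_op (L T)"
  using L_Fsa by (auto simp: Fsa_def selfadjoint_op_def)

lemma quad_form_L_orth_proj:
  "unit_vec v \<Longrightarrow> r \<in> l2 \<Longrightarrow> quad_form (L (orth_proj {v})) r = (cmod (l2inner r (phi v)))\<^sup>2"
  by (simp add: L_orth_proj quad_form_orth_proj_singleton phi_l2)

definition tp_phi :: "vec \<Rightarrow> vec \<Rightarrow> real" where
  "tp_phi u v = (cmod (l2inner (phi u) (phi v)))\<^sup>2"

lemma tp_phi_commute: "unit_vec u \<Longrightarrow> unit_vec v \<Longrightarrow> tp_phi u v = tp_phi v u"
  by (simp add: tp_phi_def cmod_l2inner_commute phi_l2)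

lemma tp_phi_le_1: "unit_vec u \<Longrightarrow> unit_vec v \<Longrightarrow> tp_phi u v \<le> 1"
  by (simp add: tp_phi_def cmod_l2inner_unit_vec_le unit_vec_phi)

lemma quad_form_L_orthogonal_combination:
  assumes u: "unit_vec u" and v: "unit_vec v"
  shows "quad_form (L (orth_proj {cscale \<alpha> u + cscale \<beta> v})) (phi u)
       = (cmod \<alpha>)\<^sup>2 + (cmod \<beta>)\<^sup>2 * tp_phi u v
         + Re (\<alpha> * cnj \<beta>) * quad_form (L (herm_pair u v 1)) (phi u)
         + Im (\<alpha> * cnj \<beta>) * quad_form (L (herm_pair u v \<i>)) (phi u)"
proof -
  have ul: "u \<in> l2" and vl: "v \<in> l2" using u v by (auto simp: unit_vec_def)
  have F: "orth_proj {u} \<in> Fsa" "orth_proj {v} \<in> Fsa" "\<And>c. herm_pair u v c \<in> Fsa"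
    using ul vl by (auto intro: Fsa_orth_proj Fsa_herm_pair)
  have F3: "op_lincomb a (orth_proj {v}) 1 (herm_pair u v c) \<in> Fsa" for a c
    using F by (intro Fsa_op_lincomb)
  let ?c = "\<alpha> * cnj \<beta>"
  have "L (orth_proj {cscale \<alpha> u + cscale \<beta> v}) =
    L (op_lincomb ((cmod \<alpha>)\<^sup>2) (orth_proj {u}) 1
      (op_lincomb ((cmod \<beta>)\<^sup>2) (orth_proj {v}) 1 (herm_pair u v ?c)))"
    by (simp only: orth_proj_orthogonal_combination[OF ul vl])
  also have "\<dots> = op_lincomb ((cmod \<alpha>)\<^sup>2) (L (orth_proj {u})) 1
      (op_lincomb ((cmod \<beta>)\<^sup>2) (L (orth_proj {v})) 1 (L (herm_pair u v ?c)))"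
    by (simp only: L_op_lincomb[OF F(1) F3] L_op_lincomb[OF F(2) F(3)])
  also have "L (herm_pair u v ?c)
      = op_lincomb (Re ?c) (L (herm_pair u v 1)) (Im ?c) (L (herm_pair u v \<i>))"
    by (subst herm_pair_Re_Im) (rule L_op_lincomb[OF F(3) F(3)])
  finally have "L (orth_proj {cscale \<alpha> u + cscale \<beta> v}) =
    op_lincomb ((cmod \<alpha>)\<^sup>2) (L (orth_proj {u})) 1 (op_lincomb ((cmod \<beta>)\<^sup>2) (L (orth_proj {v})) 1
      (op_lincomb (Re ?c) (L (herm_pair u v 1)) (Im ?c) (L (herm_pair u v \<i>))))" .
  moreover have "quad_form (orth_proj {phi u}) (phi u) = 1"
    using quad_form_orth_proj_singleton[OF phi_l2 phi_l2, OF u u] unit_vec_phi[OF u]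
    by (simp add: unit_vec_def)
  moreover have "bounded_op (orth_proj {phi u})"
    using phi_l2[OF u] by (intro bounded_orth_proj) simp
  moreover have "quad_form (L (orth_proj {v})) (phi u) = tp_phi u v"
    using quad_form_L_orth_proj[OF v phi_l2[OF u]] by (simp add: tp_phi_def)
  ultimately show ?thesis
    using L_orth_proj[OF u] phi_l2[OF u] F bounded_op_L
    by (simp add: quad_form_op_lincomb bounded_op_lincomb)
qed

text \<open>The cross terms vanish because the left-hand side is a transition probability, hence at
  most 1, for every unit vector \<alpha>u + \<beta>v.\<close>

lemma tp_phi_orthogonal_combination:
  assumes u: "unit_vec u" and v: "unit_vec v" and uv: "l2inner u v = 0"
    and ab: "(cmod \<alpha>)\<^sup>2 + (cmod \<beta>)\<^sup>2 = 1"
  shows "tp_phi u (cscale \<alpha> u + cscale \<beta> v) = (cmod \<alpha>)\<^sup>2 + (cmod \<beta>)\<^sup>2 * tp_phi u v"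
proof -
  define a1 where "a1 = quad_form (L (herm_pair u v 1)) (phi u)"
  define a2 where "a2 = quad_form (L (herm_pair u v \<i>)) (phi u)"
  have expand: "tp_phi u (cscale \<alpha>' u + cscale \<beta>' v) = (cmod \<alpha>')\<^sup>2 + (cmod \<beta>')\<^sup>2 * tp_phi u v
      + Re (\<alpha>' * cnj \<beta>') * a1 + Im (\<alpha>' * cnj \<beta>') * a2"
    if "(cmod \<alpha>')\<^sup>2 + (cmod \<beta>')\<^sup>2 = 1" for \<alpha>' \<beta>'
    using quad_form_L_orthogonal_combination[OF u v, of \<alpha>' \<beta>']
      quad_form_L_orth_proj[OF unit_vec_orthogonal_combination[OF u v uv that] phi_l2[OF u]]
    unfolding a1_def a2_def tp_phi_def by simp
  have le: "tp_phi u (cscale \<alpha>' u + cscale \<beta>' v) \<le> 1"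
    if "(cmod \<alpha>')\<^sup>2 + (cmod \<beta>')\<^sup>2 = 1" for \<alpha>' \<beta>'
    using tp_phi_le_1[OF u unit_vec_orthogonal_combination[OF u v uv that]] .
  have k: "0 \<le> tp_phi u v" by (simp add: tp_phi_def)
  have "a1 = 0"
  proof (rule zero_if_cross_term_bounded[OF k])
    fix p b :: real assume "p\<^sup>2 + b\<^sup>2 = 1"
    then show "p\<^sup>2 + b\<^sup>2 * tp_phi u v + p * b * a1 \<le> 1"
      using le[of "complex_of_real p" "complex_of_real b"]
        expand[of "complex_of_real p" "complex_of_real b"]
      by simp
  qed
  moreover have "- a2 = 0"
  proof (rule zero_if_cross_term_bounded[OF k])
    fix p b :: real assume "p\<^sup>2 + b\<^sup>2 = 1"
    then show "p\<^sup>2 + b\<^sup>2 * tp_phi u v + p * b * - a2 \<le> 1"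
      using le[of "complex_of_real p" "\<i> * complex_of_real b"]
        expand[of "complex_of_real p" "\<i> * complex_of_real b"]
      by (simp add: norm_mult)
  qed
  ultimately show ?thesis using expand[OF ab] by simp
qed

lemma L_orth_proj_diag_pair:
  assumes u: "unit_vec u" and v: "unit_vec v" and uv: "l2inner u v = 0" and w: "cmod \<omega> = 1"
  shows "orth_proj {phi (diag u v \<omega>)} + orth_proj {phi (diag u v (- \<omega>))}
       = orth_proj {phi u} + orth_proj {phi v}"
proof -
  have ul: "u \<in> l2" and vl: "v \<in> l2" using u v by (auto simp: unit_vec_def)
  have x: "unit_vec (diag u v \<omega>)" "unit_vec (diag u v (- \<omega>))"
    using unit_vec_diag[OF u v uv] w by auto
  have "L (orth_proj {diag u v \<omega>} + orth_proj {diag u v (- \<omega>)}) = L (orth_proj {u} + orth_proj {v})"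
    using orth_proj_diag_pair[OF ul vl w] by simp
  then show ?thesis
    using x u v by (simp add: L_add Fsa_orth_proj unit_vec_def L_orth_proj)
qed

lemma tp_phi_diag:
  assumes u: "unit_vec u" and v: "unit_vec v" and uv: "l2inner u v = 0" and w: "cmod \<omega> = 1"
  shows "tp_phi u (diag u v \<omega>) = (1 + tp_phi u v) / 2"
    and "tp_phi v (diag u v \<omega>) = (1 + tp_phi u v) / 2"
proof -
  have vu: "l2inner v u = 0" using l2inner_commute[of u v] u v uv by (simp add: unit_vec_def)
  have coeffs: "(cmod (inv_sqrt2 * \<omega>))\<^sup>2 = 1/2"
    using w by (simp add: norm_mult power_mult_distrib cmod_inv_sqrt2)
  show "tp_phi u (diag u v \<omega>) = (1 + tp_phi u v) / 2"
    using tp_phi_orthogonal_combination[OF u v uv cmod_diag_coeffs[OF w]] coeffs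
    by (simp add: diag_def cmod_inv_sqrt2)
  have "diag u v \<omega> = cscale (inv_sqrt2 * \<omega>) v + cscale inv_sqrt2 u"
    by (simp add: diag_def add.commute)
  moreover have "(cmod (inv_sqrt2 * \<omega>))\<^sup>2 + (cmod inv_sqrt2)\<^sup>2 = 1"
    using cmod_diag_coeffs[OF w] by simp
  ultimately show "tp_phi v (diag u v \<omega>) = (1 + tp_phi u v) / 2"
    using tp_phi_orthogonal_combination[OF v u vu] coeffs tp_phi_commute[OF u v]
    by (simp add: cmod_inv_sqrt2)
qed

lemma tp_phi_diag_1_i:
  assumes u: "unit_vec u" and v: "unit_vec v" and uv: "l2inner u v = 0"
  shows "tp_phi (diag u v 1) (diag u v \<i>) = (1 + tp_phi u v) / 2"
proof -
  let ?x1 = "diag u v 1" and ?x2 = "diag u v (- 1)"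
  have x: "unit_vec ?x1" "unit_vec ?x2" using unit_vec_diag[OF u v uv] by auto
  have x12: "l2inner ?x1 ?x2 = 0"
    unfolding diag_def l2inner_orthonormal_pair[OF u v uv] by (simp add: cnj_inv_sqrt2)
  have "u = cscale inv_sqrt2 ?x1 + cscale inv_sqrt2 ?x2"
    using inv_sqrt2_square by (simp add: diag_def cscale_def fun_eq_iff algebra_simps)
  then have "tp_phi ?x1 u = 1/2 + 1/2 * tp_phi ?x1 ?x2"
    using tp_phi_orthogonal_combination[OF x x12, of inv_sqrt2 inv_sqrt2]
    by (simp add: cmod_inv_sqrt2)
  moreover have "diag u v \<i> = cscale ((1 + \<i>) / 2) ?x1 + cscale ((1 - \<i>) / 2) ?x2"
    using inv_sqrt2_square by (simp add: diag_def cscale_def fun_eq_iff field_simps)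
  moreover have c: "(cmod ((1 + \<i>) / 2))\<^sup>2 = 1/2" "(cmod ((1 - \<i>) / 2))\<^sup>2 = 1/2"
    by (simp_all add: cmod_power2 power_divide)
  then have "tp_phi ?x1 (cscale ((1 + \<i>) / 2) ?x1 + cscale ((1 - \<i>) / 2) ?x2)
      = 1/2 + 1/2 * tp_phi ?x1 ?x2"
    using tp_phi_orthogonal_combination[OF x x12, of "(1 + \<i>) / 2" "(1 - \<i>) / 2"]
    unfolding c by simp
  ultimately have "tp_phi ?x1 (diag u v \<i>) = tp_phi ?x1 u" by simp
  then show ?thesis
    using tp_phi_diag(1)[OF u v uv, of 1] tp_phi_commute[OF u x(1)] by simp
qed

lemma tp_phi_orthogonal_0_or_1:
  assumes u: "unit_vec u" and v: "unit_vec v" and uv: "l2inner u v = 0"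
  shows "tp_phi u v = 0 \<or> tp_phi u v = 1"
proof (rule ccontr)
  define \<kappa> where "\<kappa> = tp_phi u v"
  assume "\<not> (tp_phi u v = 0 \<or> tp_phi u v = 1)"
  then have k: "0 < \<kappa>" "\<kappa> < 1"
    using tp_phi_le_1[OF u v] unfolding \<kappa>_def tp_phi_def by auto
  define r where "r = phi u"
  define s where "s = phi v"
  have r: "unit_vec r" and s: "unit_vec s"
    using unit_vec_phi u v unfolding r_def s_def by auto
  have sig: "(cmod (l2inner s r))\<^sup>2 = \<kappa>"
    using cmod_l2inner_commute r s unfolding \<kappa>_def tp_phi_def r_def s_def
    by (simp add: unit_vec_def)
  obtain f where f: "unit_vec f" and rf: "l2inner r f = 0"
    and s_eq: "s = cscale (l2inner s r) r + cscale (complex_of_real (sqrt (1 - \<kappa>))) f"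
    using unit_vec_second_basis_vec[OF r s] sig k by auto
  have phi_diag: "unit_vec (phi (diag u v \<omega>))" if "cmod \<omega> = 1" for \<omega>
    using unit_vec_phi unit_vec_diag[OF u v uv that] by blast
  have in_plane: "phi (diag u v \<omega>) = cscale (l2inner (phi (diag u v \<omega>)) r) r
      + cscale (l2inner (phi (diag u v \<omega>)) f) f" if "cmod \<omega> = 1" for \<omega>
  proof (rule in_span_if_orth_proj_sum_eq[OF r f rf phi_diag[OF that] phi_diag[of "- \<omega>"] s_eq])
    show "cmod (- \<omega>) = 1" using that by simp
    show "orth_proj {phi (diag u v \<omega>)} + orth_proj {phi (diag u v (- \<omega>))} =
        orth_proj {r} + orth_proj {s}"
      unfolding r_def s_def by (rule L_orth_proj_diag_pair[OF u v uv that])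
  qed
  have "(cmod (l2inner r (phi (diag u v \<omega>))))\<^sup>2 = (1 + \<kappa>) / 2"
    and "(cmod (l2inner s (phi (diag u v \<omega>))))\<^sup>2 = (1 + \<kappa>) / 2" if "cmod \<omega> = 1" for \<omega>
    using tp_phi_diag[OF u v uv that] unfolding tp_phi_def r_def s_def \<kappa>_def by auto
  moreover have "(cmod (l2inner (phi (diag u v 1)) (phi (diag u v \<i>))))\<^sup>2 = (1 + \<kappa>) / 2"
    using tp_phi_diag_1_i[OF u v uv] unfolding tp_phi_def \<kappa>_def .
  ultimately show False
    by (intro no_transition_configuration_in_plane[OF r f rf k sig s_eq phi_diag in_plane
          phi_diag in_plane]) simp_all
qed

lemma L_orth_proj_eq_if_tp_phi_1:
  assumes u: "unit_vec u" and v: "unit_vec v" and k1: "tp_phi u v = 1"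
  shows "L (orth_proj {v}) = L (orth_proj {u})"
  using orth_proj_eq_if_cmod_l2inner_1[OF unit_vec_phi[OF u] unit_vec_phi[OF v]] k1
  by (simp add: tp_phi_def L_orth_proj u v)

lemma tp_phi_1_if_L_orth_proj_eq:
  assumes u: "unit_vec u" and v: "unit_vec v" and eq: "L (orth_proj {v}) = L (orth_proj {u})"
  shows "tp_phi u v = 1"
proof -
  have "tp_phi u v = quad_form (L (orth_proj {v})) (phi u)"
    by (simp add: tp_phi_def quad_form_L_orth_proj v phi_l2 u)
  also have "\<dots> = 1"
    unfolding eq using quad_form_L_orth_proj[OF u phi_l2[OF u]] unit_vec_phi[OF u]
    by (simp add: unit_vec_def)
  finally show ?thesis .
qed

lemma L_orth_proj_collapse_plane:
  assumes u: "unit_vec u" and v: "unit_vec v" and uv: "l2inner u v = 0"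
    and eq: "L (orth_proj {v}) = L (orth_proj {u})"
    and x: "unit_vec x" and x_eq: "x = cscale \<alpha> u + cscale \<beta> v"
  shows "L (orth_proj {x}) = L (orth_proj {u})"
proof -
  have ab: "(cmod \<alpha>)\<^sup>2 + (cmod \<beta>)\<^sup>2 = 1"
    by (rule cmod_coords_orthonormal_pair[OF u v uv x x_eq])
  have "tp_phi u x = 1"
    using tp_phi_orthogonal_combination[OF u v uv ab] tp_phi_1_if_L_orth_proj_eq[OF u v eq] ab x_eq
    by simp
  then show ?thesis
    using L_orth_proj_eq_if_tp_phi_1 u x by blast
qed

lemma L_orth_proj_collapse_perp:
  assumes u: "unit_vec u" and v: "unit_vec v" and uv: "l2inner u v = 0"
    and eq: "L (orth_proj {v}) = L (orth_proj {u})"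
    and z: "unit_vec z" and zu: "l2inner z u = 0" and zv: "l2inner z v = 0"
  shows "L (orth_proj {z}) = L (orth_proj {u})"
proof -
  have ul: "u \<in> l2" and vl: "v \<in> l2" and zl: "z \<in> l2" using u v z by (auto simp: unit_vec_def)
  have uz: "l2inner u z = 0" using l2inner_commute[OF zl ul] zu by simp
  have "tp_phi u z \<noteq> 0"
  proof
    assume k0: "tp_phi u z = 0"
    define x where "x = diag u z 1"
    have x: "unit_vec x" unfolding x_def using unit_vec_diag[OF u z uz] by simp
    have vx: "l2inner v x = 0"
      using ul zl vl l2inner_commute[OF ul vl] l2inner_commute[OF zl vl] uv zv
      by (simp add: x_def diag_def l2inner_add_right l2inner_cscale_right)
    have "tp_phi v x = quad_form (L (orth_proj {x})) (phi v)"
      by (simp add: tp_phi_def quad_form_L_orth_proj x phi_l2 v)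
    also have "\<dots> = quad_form (L (orth_proj {x})) (phi u)"
    proof (rule quad_form_eq_if_orth_proj_eq[OF unit_vec_phi[OF u] unit_vec_phi[OF v], symmetric])
      show "orth_proj {phi u} = orth_proj {phi v}" using eq by (simp add: L_orth_proj u v)
      show "bounded_op (L (orth_proj {x}))"
        using x by (intro bounded_op_L Fsa_orth_proj) (auto simp: unit_vec_def)
    qed
    also have "\<dots> = tp_phi u x"
      by (simp add: tp_phi_def quad_form_L_orth_proj x phi_l2 u)
    also have "\<dots> = 1/2"
      using tp_phi_diag(1)[OF u z uz, of 1] k0 unfolding x_def by simp
    finally show False
      using tp_phi_orthogonal_0_or_1[OF v x vx] by simp
  qed
  then show ?thesis
    using tp_phi_orthogonal_0_or_1[OF u z uz] L_orth_proj_eq_if_tp_phi_1[OF u z] by auto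
qed

lemma L_orth_proj_collapse_direction:
  assumes u: "unit_vec u" and v: "unit_vec v" and uv: "l2inner u v = 0"
    and eq: "L (orth_proj {v}) = L (orth_proj {u})"
    and z: "z \<in> l2" and zu: "l2inner z u = 0" and zv: "l2inner z v = 0"
    and p: "p = cscale a u + cscale b v"
  obtains x c where "unit_vec x" "L (orth_proj {x}) = L (orth_proj {u})" "l2inner x z = 0"
    "p = cscale c x"
proof (cases "p = 0")
  case True
  have ul: "u \<in> l2" using u by (simp add: unit_vec_def)
  have "l2inner u z = 0" using l2inner_commute[OF z ul] zu by simp
  moreover have "p = cscale 0 u" using True by (simp add: cscale_def fun_eq_iff)
  ultimately show ?thesis using that[OF u refl] by blast
next
  case False
  have ul: "u \<in> l2" and vl: "v \<in> l2" using u v by (auto simp: unit_vec_def)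
  then have pl: "p \<in> l2" using p by simp
  obtain x where x: "unit_vec x" and "p = cscale (complex_of_real (l2norm p)) x"
    and "l2norm p > 0"
    using unit_vec_normalize[OF pl False] by blast
  then obtain c where p_x: "p = cscale c x" and c: "c \<noteq> 0" by force
  have "x = cscale (1 / c) p" using c unfolding p_x by (simp add: cscale_def fun_eq_iff)
  then have x_eq: "x = cscale (a / c) u + cscale (b / c) v"
    unfolding p by (simp add: cscale_def fun_eq_iff add_divide_distrib)
  have "l2inner x z = 0"
    using x_eq zu zv ul vl z l2inner_commute[OF z ul] l2inner_commute[OF z vl]
    by (simp add: l2inner_add_left l2inner_cscale_left)
  then show ?thesis
    using that[OF x L_orth_proj_collapse_plane[OF u v uv eq x x_eq]] p_x by blast
qed

lemma L_orth_proj_collapse: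
  assumes u: "unit_vec u" and v: "unit_vec v" and uv: "l2inner u v = 0"
    and eq: "L (orth_proj {v}) = L (orth_proj {u})" and y: "unit_vec y"
  shows "L (orth_proj {y}) = L (orth_proj {u})"
proof -
  note E = orthonormal_pair[OF u v uv]
  have yl: "y \<in> l2" using y by (simp add: unit_vec_def)
  define p where "p = orth_proj {u, v} y"
  have p_eq: "p = cscale (l2inner y u) u + cscale (l2inner y v) v"
    unfolding p_def using orth_proj_pair[OF E(2) yl] .
  show ?thesis
  proof (cases "y = p")
    case True
    then have "y = cscale (l2inner y u) u + cscale (l2inner y v) v" using p_eq by simp
    then show ?thesis by (rule L_orth_proj_collapse_plane[OF u v uv eq y])
  next
    case False
    then obtain z c where z: "unit_vec z" and zu: "l2inner z u = 0" and zv: "l2inner z v = 0"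
      and y_eq: "y = p + cscale c z"
      using unit_vec_orthonormal_split[OF E(1) _ y] unfolding p_def
      by (metis finite.emptyI finite.insertI insert_iff)
    have Lz: "L (orth_proj {z}) = L (orth_proj {u})"
      by (rule L_orth_proj_collapse_perp[OF u v uv eq z zu zv])
    obtain x cp where x: "unit_vec x" and Lx: "L (orth_proj {x}) = L (orth_proj {u})"
      and xz: "l2inner x z = 0" and p_x: "p = cscale cp x"
      using L_orth_proj_collapse_direction[OF u v uv eq _ zu zv p_eq] z
      by (auto simp: unit_vec_def)
    have "y = cscale cp x + cscale c z" using y_eq p_x by simp
    then show ?thesis
      using L_orth_proj_collapse_plane[OF x z xz] Lx Lz y by simp
  qed
qed

text \<open>If L collapsed two orthogonal directions, it would collapse all of them, contradicting
  L(Proj 1) = Proj 1.\<close>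

lemma tp_phi_orthogonal:
  assumes u: "unit_vec u" and v: "unit_vec v" and uv: "l2inner u v = 0"
  shows "tp_phi u v = 0"
proof -
  have "orth_proj {basis_vec i} = L (orth_proj {u})" if k1: "tp_phi u v = 1" for i
  proof -
    obtain P where "P \<in> Proj 1" "L P = orth_proj {basis_vec i}"
      using orth_proj_in_Proj1[OF unit_vec_basis_vec] proj by (metis imageE)
    moreover obtain y where "unit_vec y" "P = orth_proj {y}"
      using Proj1_orth_proj[OF \<open>P \<in> Proj 1\<close>] by blast
    ultimately show ?thesis
      using L_orth_proj_collapse[OF u v uv L_orth_proj_eq_if_tp_phi_1[OF u v k1]] by metis
  qed
  moreover have "orth_proj {basis_vec 0} (basis_vec 0) = basis_vec 0"
    and "orth_proj {basis_vec 1} (basis_vec 0) = 0"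
    by (simp_all add: orth_proj_singleton l2inner_basis_vec cscale_def fun_eq_iff)
  moreover have "basis_vec 0 \<noteq> 0"
    by (auto simp: basis_vec_def fun_eq_iff)
  ultimately show ?thesis
    using tp_phi_orthogonal_0_or_1[OF u v uv] by metis
qed

lemma tp_phi_eq:
  assumes x: "unit_vec x" and y: "unit_vec y"
  shows "tp_phi x y = (cmod (l2inner x y))\<^sup>2"
proof (cases "(cmod (l2inner y x))\<^sup>2 < 1")
  case True
  then obtain v where v: "unit_vec v" and xv: "l2inner x v = 0"
    and y_eq: "y = cscale (l2inner y x) x
      + cscale (complex_of_real (sqrt (1 - (cmod (l2inner y x))\<^sup>2))) v"
    using unit_vec_second_basis_vec[OF x y] by blast
  have "(cmod (l2inner y x))\<^sup>2 + (cmod (complex_of_real (sqrt (1 - (cmod (l2inner y x))\<^sup>2))))\<^sup>2 = 1"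
    using True by simp
  then have "tp_phi x y = (cmod (l2inner y x))\<^sup>2"
    using tp_phi_orthogonal_combination[OF x v xv] tp_phi_orthogonal[OF x v xv]
    by (subst (1) y_eq) simp
  then show ?thesis
    using cmod_l2inner_commute[of x y] x y by (simp add: unit_vec_def)
next
  case False
  then have "(cmod (l2inner x y))\<^sup>2 = 1"
    using cmod_l2inner_unit_vec_le[OF y x] cmod_l2inner_commute[of x y] x y
    by (simp add: unit_vec_def)
  then have "L (orth_proj {y}) = L (orth_proj {x})"
    using orth_proj_eq_if_cmod_l2inner_1[OF x y] by simp
  then show ?thesis
    using tp_phi_1_if_L_orth_proj_eq[OF x y] \<open>(cmod (l2inner x y))\<^sup>2 = 1\<close> by simp
qed

lemma quad_form_L_phi:
  assumes x: "unit_vec x"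
  shows "X \<in> op_span (Proj 1) \<Longrightarrow> quad_form (L X) (phi x) = quad_form X x"
proof (induction rule: op_span.induct)
  case zero
  show ?case unfolding L_zero by (simp add: quad_form_def l2inner_def)
next
  case (step Q T a)
  obtain w where w: "unit_vec w" "Q = orth_proj {w}" using Proj1_orth_proj step(1) by blast
  have QF: "Q \<in> Fsa" using step(1) Proj_subset_Fsa by auto
  have TF: "T \<in> Fsa" using op_span_subset_Fsa[OF Proj_subset_Fsa step(2)] .
  have xl: "x \<in> l2" and wl: "w \<in> l2" using x w by (auto simp: unit_vec_def)
  have bQ: "bounded_op Q" "bounded_op T" using QF TF by (auto simp: Fsa_def selfadjoint_op_def)
  have "quad_form (L (op_lincomb a Q 1 T)) (phi x)
      = a * quad_form (L Q) (phi x) + quad_form (L T) (phi x)"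
    using L_op_lincomb[OF QF TF] bounded_op_L QF TF phi_l2[OF x] by (simp add: quad_form_op_lincomb)
  also have "quad_form (L Q) (phi x) = quad_form Q x"
    using w tp_phi_eq[OF x w(1)] quad_form_L_orth_proj[OF w(1) phi_l2[OF x]]
      quad_form_orth_proj_singleton[OF xl wl] by (simp add: tp_phi_def)
  finally show ?case using step(3) bQ xl by (simp add: quad_form_op_lincomb)
qed

lemma inj_on_L: "inj_on L Fsa"
proof (rule inj_onI)
  fix S T assume S: "S \<in> Fsa" and T: "T \<in> Fsa" and eq: "L S = L T"
  let ?D = "op_lincomb 1 S (-1) T"
  have D: "?D \<in> Fsa" using Fsa_op_lincomb[OF S T] .
  have "L ?D = op_lincomb 1 (L S) (-1) (L T)" by (rule L_op_lincomb[OF S T])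
  also have "\<dots> = 0" unfolding eq by (simp add: op_lincomb_fun fun_eq_iff)
  finally have LD: "L ?D = 0" .
  have span: "?D \<in> op_span (Proj 1)" using D Fsa_eq_op_span_Proj[of 1] by simp
  have "quad_form ?D x = 0" if "unit_vec x" for x
    using quad_form_L_phi[OF that span] LD by (simp add: quad_form_def l2inner_def)
  then have "?D = 0" using D by (intro selfadjoint_op_eq_0I) (auto simp: Fsa_def)
  then show "S = T" by (simp add: op_lincomb_fun fun_eq_iff)
qed

end

theorem proposition2:
  fixes L :: "op \<Rightarrow> op" and k :: nat
  assumes maps_into: "\<forall>T\<in>Fsa. L T \<in> T1sa"
    and linear: "\<forall>S\<in>Fsa. \<forall>T\<in>Fsa. \<forall>a b::real.
                   L (op_add (op_scale a S) (op_scale b T)) = op_add (op_scale a (L S)) (op_scale b (L T))"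
    and k_pos: "k \<ge> 1"
    and proj: "L ` Proj k = Proj k"
    and inj: "k > 1 \<longrightarrow> inj_on L Fsa"
  shows "bij_betw L Fsa Fsa"
proof -
  interpret proj_preserving L k
    using linear k_pos proj by unfold_locales
  have "inj_on L Fsa"
  proof (cases "k = 1")
    case True
    interpret rank_one_preserving L
      using linear proj True by unfold_locales simp_all
    show ?thesis by (rule inj_on_L)
  qed (use inj k_pos in simp)
  then show ?thesis
    unfolding bij_betw_def using L_image_Fsa by simp
qed

end
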